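(* Consider a weighted ensemble method with $N$ particles (as defined in the context). Fix $T\ge1$ and a measurable $f:X\to\mathbb R$ with $\mu_0K^t|f|<\infty$ for $0\le t\le T-1$, and suppose $\mu(|f|)<\infty$. For $0\le t\le T-1$ define $$Y_t=\mathbb E\Big[\frac1T\sum_{s=0}^{T-1}\sum_{i=1}^Nw_s^if(\xi_s^i)\,\Big|\,\mathcal F_t\Big],\qquad \hat Y_t=\mathbb E\Big[\frac1T\sum_{s=0}^{T-1}\sum_{i=1}^Nw_s^if(\xi_s^i)\,\Big|\,\hat{\mathcal F}_t\Big],$$ and for $0\le t\le T$ let $h_t^T=\sum_{s=t}^{T-1}K^{s-t}(f-\mu(f))$ (so $h_T^T=0$). Then $Y_0,\hat Y_0,Y_1,\hat Y_1,\dots,\hat Y_{T-2},Y_{T-1}$ is a martingale and, for $0\le t\le T-2$, $$\hat Y_t-Y_t=\frac1T\Big[\sum_{i=1}^N\hat w_t^i\,Kh_{t+1}^T(\hat\xi_t^i)-\sum_{i=1}^Nw_t^i\,Kh_{t+1}^T(\xi_t^i)\Big],$$ $$Y_{t+1}-\hat Y_t=\frac1T\sum_{i=1}^N\hat w_t^i\Big(h_{t+1}^T(\xi_{t+1}^i)-Kh_{t+1}^T(\hat\xi_t^i)\Big).$$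
   Context: Splitting method: Let $K$ be a Markov transition kernel on a measurable state space $X$ with invariant probability $\mu$, and $\mu_0$ a probability distribution on $X$. A splitting method produces, for $t=0,1,2,\dots$, particles $\xi_t^1,\dots,\xi_t^{N_t}\in X$ with weights $w_t^1,\dots,w_t^{N_t}\ge 0$, together with a filtration $\mathcal F_0\subseteq\hat{\mathcal F}_0\subseteq\mathcal F_1\subseteq\hat{\mathcal F}_1\subseteq\cdots$, as follows. Initially $\xi_0^1,\dots,\xi_0^{N_0}$ are i.i.d. with law $\mu_0$ and $w_0^i=1/N_0$. At each time $t\ge 0$: (Splitting step) for each $i$ a number $C_t^i>0$ is chosen, where $(\xi_t^i,w_t^i,C_t^i)_{1\le i\le N_t}$ is $\mathcal F_t$-measurable; random nonnegative integers $N_t^i$ are drawn with $\mathbb E[N_t^i\mid\mathcal F_t]=C_t^i$; each $\xi_t^i$ is replaced by $N_t^i$ copies, each with weight $w_t^i/C_t^i$; the resulting children are listed as $(\hat\xi_t^j,\hat w_t^j)_{1\le j\le N_{t+1}}$ with $N_{t+1}=\sum_i N_t^i$, and they are $\hat{\mathcal F}_t$-measurable. (Evolution step) conditional on $\hat{\mathcal F}_t$, the particles $\xi_{t+1}^1,\dots,\xi_{t+1}^{N_{t+1}}$ are independent with $\xi_{t+1}^j\sim K(\hat\xi_t^j,\cdot)$, and $w_{t+1}^j=\hat w_t^j$. Weighted ensemble (WE) method: a splitting method in which at each time $t$ the splitting step is: the indices $1,\dots,N_t$ are partitioned ($\mathcal F_t$-measurably) into bins $u$, with $w_t(u)=\sum_{i\in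 u}w_t^i$; integers $N_t(u)\ge1$ are chosen ($\mathcal F_t$-measurably); for $i\in u$, $C_t^i=N_t(u)w_t^i/w_t(u)$; the $N_t^i$ satisfy $\mathbb E[N_t^i\mid\mathcal F_t]=C_t^i$ and $\sum_{i\in u}N_t^i=N_t(u)$ almost surely; and every child of a parent in bin $u$ receives weight $w_t(u)/N_t(u)$. A WE method with $N$ particles has $N_0=N$ and $\sum_uN_t(u)=N$ for all $t$, so $N_t=N$ for all $t$ (and $\sum_i w_t^i=1$ for all $t$). *)

theory Defs
  imports "HOL-Probability.Probability"
begin

definition kernel_app :: "('x \<Rightarrow> 'x measure) \<Rightarrow> ('x \<Rightarrow> real) \<Rightarrow> 'x \<Rightarrow> real" where
  "kernel_app K g x = (\<integral>y. g y \<partial>(K x))"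

definition kernel_pow :: "('x \<Rightarrow> 'x measure) \<Rightarrow> nat \<Rightarrow> ('x \<Rightarrow> real) \<Rightarrow> 'x \<Rightarrow> real" where
  "kernel_pow K n g = (kernel_app K ^^ n) g"

definition meas_kpow :: "'x measure \<Rightarrow> ('x \<Rightarrow> 'x measure) \<Rightarrow> nat \<Rightarrow> 'x measure" where
  "meas_kpow \<mu>0 K t = ((\<lambda>\<nu>. \<nu> \<bind> K) ^^ t) \<mu>0"

definition hT :: "('x \<Rightarrow> 'x measure) \<Rightarrow> 'x measure \<Rightarrow> ('x \<Rightarrow> real) \<Rightarrow> nat \<Rightarrow> nat \<Rightarrow> 'x \<Rightarrow> real" where
  "hT K \<mu> f T t x = (\<Sum>s\<in>{t..<T}. kernel_pow K (s - t) (\<lambda>y. f y - (\<integral>z. f z \<partial>\<mu>)) x)"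

definition martingale_upto ::
  "'a measure \<Rightarrow> (nat \<Rightarrow> 'a measure) \<Rightarrow> (nat \<Rightarrow> 'a \<Rightarrow> real) \<Rightarrow> nat \<Rightarrow> bool" where
  "martingale_upto M G Z n \<longleftrightarrow>
     (\<forall>k\<le>n. subalgebra M (G k)) \<and>
     (\<forall>k<n. subalgebra (G (Suc k)) (G k)) \<and>
     (\<forall>k\<le>n. integrable M (Z k) \<and> Z k \<in> borel_measurable (G k)) \<and>
     (\<forall>k<n. AE \<omega> in M. real_cond_exp M (G k) (Z (Suc k)) \<omega> = Z k \<omega>)"

text \<open>Weighted ensemble method with N particles (indices 0..N-1).
  xi t i, w t i: particles/weights at time t; xih t j, wh t j: children after splitting at time t;
  C t i: the numbers C_t^i; Nsp t i: the offspring numbers N_t^i; par t j: parent of child j;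
  bin t i: label of the bin containing index i at time t; Nb t u: the number N_t(u).\<close>
definition WE_method ::
  "'a measure \<Rightarrow> 'x measure \<Rightarrow> ('x \<Rightarrow> 'x measure) \<Rightarrow> 'x measure \<Rightarrow> nat
   \<Rightarrow> (nat \<Rightarrow> 'a measure) \<Rightarrow> (nat \<Rightarrow> 'a measure)
   \<Rightarrow> (nat \<Rightarrow> nat \<Rightarrow> 'a \<Rightarrow> 'x) \<Rightarrow> (nat \<Rightarrow> nat \<Rightarrow> 'a \<Rightarrow> real)
   \<Rightarrow> (nat \<Rightarrow> nat \<Rightarrow> 'a \<Rightarrow> 'x) \<Rightarrow> (nat \<Rightarrow> nat \<Rightarrow> 'a \<Rightarrow> real)
   \<Rightarrow> (nat \<Rightarrow> nat \<Rightarrow> 'a \<Rightarrow> real) \<Rightarrow> (nat \<Rightarrow> nat \<Rightarrow> 'a \<Rightarrow> nat) \<Rightarrow> (nat \<Rightarrow> nat \<Rightarrow> 'a \<Rightarrow> nat)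
   \<Rightarrow> (nat \<Rightarrow> nat \<Rightarrow> 'a \<Rightarrow> nat) \<Rightarrow> (nat \<Rightarrow> nat \<Rightarrow> 'a \<Rightarrow> nat) \<Rightarrow> bool" where
  "WE_method M X K \<mu>0 N F Fh xi w xih wh C Nsp par bin Nb \<longleftrightarrow>
     \<comment> \<open>filtration F_0 \<subseteq> Fh_0 \<subseteq> F_1 \<subseteq> Fh_1 \<subseteq> ... of sub-sigma-algebras\<close>
     (\<forall>t. subalgebra M (F t) \<and> subalgebra M (Fh t) \<and>
          subalgebra (Fh t) (F t) \<and> subalgebra (F (Suc t)) (Fh t)) \<and>
     \<comment> \<open>initialisation: i.i.d. with law mu0, weights 1/N\<close>
     prob_space.indep_vars M (\<lambda>_. X) (xi 0) {..<N} \<and>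
     (\<forall>i<N. distr M X (xi 0 i) = \<mu>0) \<and>
     (\<forall>i<N. \<forall>\<omega>\<in>space M. w 0 i \<omega> = 1 / real N) \<and>
     \<comment> \<open>splitting step: (xi_t^i, w_t^i, C_t^i) are F_t-measurable, w \<ge> 0, C > 0\<close>
     (\<forall>t. \<forall>i<N. xi t i \<in> measurable (F t) X \<and> w t i \<in> borel_measurable (F t)
              \<and> C t i \<in> borel_measurable (F t)
              \<and> (\<forall>\<omega>\<in>space M. w t i \<omega> \<ge> 0 \<and> C t i \<omega> > 0)) \<and>
     \<comment> \<open>WE bins and the numbers N_t(u), chosen F_t-measurably\<close>
     (\<forall>t. \<forall>i<N. bin t i \<in> measurable (F t) (count_space UNIV)) \<and>
     (\<forall>t u. Nb t u \<in> measurable (F t) (count_space UNIV)) \<and>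
     (\<forall>t. \<forall>\<omega>\<in>space M. \<forall>u\<in>(\<lambda>i. bin t i \<omega>) ` {..<N}. Nb t u \<omega> \<ge> 1) \<and>
     (\<forall>t. \<forall>\<omega>\<in>space M. (\<Sum>u\<in>(\<lambda>i. bin t i \<omega>) ` {..<N}. Nb t u \<omega>) = N) \<and>
     (\<forall>t. \<forall>i<N. \<forall>\<omega>\<in>space M.
        C t i \<omega> = real (Nb t (bin t i \<omega>) \<omega>) * w t i \<omega> /
                   (\<Sum>k\<in>{k. k < N \<and> bin t k \<omega> = bin t i \<omega>}. w t k \<omega>)) \<and>
     \<comment> \<open>random offspring numbers with E[N_t^i | F_t] = C_t^i\<close>
     (\<forall>t. \<forall>i<N. Nsp t i \<in> measurable M (count_space UNIV)
              \<and> integrable M (\<lambda>\<omega>. real (Nsp t i \<omega>))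
              \<and> (AE \<omega> in M. real_cond_exp M (F t) (\<lambda>\<omega>. real (Nsp t i \<omega>)) \<omega> = C t i \<omega>)) \<and>
     \<comment> \<open>sum of offspring in each bin u equals N_t(u) almost surely\<close>
     (\<forall>t. AE \<omega> in M. \<forall>u\<in>(\<lambda>i. bin t i \<omega>) ` {..<N}.
          (\<Sum>i\<in>{i. i < N \<and> bin t i \<omega> = u}. Nsp t i \<omega>) = Nb t u \<omega>) \<and>
     \<comment> \<open>children: each parent i is replaced by N_t^i copies with weight w_t^i/C_t^i
        (= w_t(u)/N_t(u) for its bin u)\<close>
     (\<forall>t. AE \<omega> in M. (\<forall>j<N. par t j \<omega> < N) \<and>
          (\<forall>i<N. card {j. j < N \<and> par t j \<omega> = i} = Nsp t i \<omega>) \<and>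
          (\<forall>j<N. xih t j \<omega> = xi t (par t j \<omega>) \<omega>
                 \<and> wh t j \<omega> = w t (par t j \<omega>) \<omega> / C t (par t j \<omega>) \<omega>
                 \<and> wh t j \<omega> = (\<Sum>k\<in>{k. k < N \<and> bin t k \<omega> = bin t (par t j \<omega>) \<omega>}. w t k \<omega>)
                              / real (Nb t (bin t (par t j \<omega>) \<omega>) \<omega>))) \<and>
     \<comment> \<open>children are Fh_t-measurable\<close>
     (\<forall>t. \<forall>j<N. xih t j \<in> measurable (Fh t) X \<and> wh t j \<in> borel_measurable (Fh t)) \<and>
     \<comment> \<open>evolution step: conditionally on Fh_t the xi_{t+1}^j are independent,
        xi_{t+1}^j ~ K(xih_t^j, .), and w_{t+1}^j = wh_t^j\<close>
     (\<forall>t A. (\<forall>j<N. A j \<in> sets X) \<longrightarrow>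
        (AE \<omega> in M. real_cond_exp M (Fh t)
                       (\<lambda>\<omega>. \<Prod>j<N. indicator (A j) (xi (Suc t) j \<omega>)) \<omega>
                     = (\<Prod>j<N. measure (K (xih t j \<omega>)) (A j)))) \<and>
     (\<forall>t. \<forall>j<N. \<forall>\<omega>\<in>space M. w (Suc t) j \<omega> = wh t j \<omega>)"

end

theory Submission
  imports Defs
begin

(* Write h_t for h_t^T and
     V_t = (1/T) (sum_{s<t} sum_i w_s^i f(xi_s^i) + sum_i w_t^i h_t(xi_t^i) + (T - t) mu(f)).
   Since h_t = f - mu(f) + K h_{t+1} and the weights sum to one, V_{T-1} is the ensemble average
   itself. The splitting step
   satisfies E[sum_j hat-w_t^j g(hat-xi_t^j) | F_t] = sum_i w_t^i g(xi_t^i), because parent i has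
   on average C_t^i children, each of weight w_t^i / C_t^i; the evolution step satisfies
   E[sum_j w_{t+1}^j g(xi_{t+1}^j) | hat-F_t] = sum_j hat-w_t^j Kg(hat-xi_t^j).
   A backward induction from t = T - 1 then identifies Y_t with V_t and hat-Y_t with the same
   expression after the splitting step, and the two increment formulas are read off; the
   martingale property is the tower property along the interleaved filtration. Integrability
   comes from the same two identities for nonnegative g, which give
   E[sum_i w_t^i g(xi_t^i)] = mu_0 K^t g. *)

lemma sum_reindex_by_parent:
  fixes \<psi> :: "nat \<Rightarrow> 'b::comm_semiring_1"
  assumes "\<And>j. j < N \<Longrightarrow> par j < N"
  shows "(\<Sum>j<N. \<psi> (par j)) = (\<Sum>i<N. of_nat (card {j. j < N \<and> par j = i}) * \<psi> i)"
proof -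
  have "(\<Sum>j<N. \<psi> (par j)) = (\<Sum>i<N. \<Sum>j\<in>{x\<in>{..<N}. par x = i}. \<psi> (par j))"
    by (rule sum.group[symmetric]) (use assms in auto)
  also have "\<dots> = (\<Sum>i<N. of_nat (card {j. j < N \<and> par j = i}) * \<psi> i)"
  proof (rule sum.cong[OF refl])
    fix i assume "i \<in> {..<N}"
    have "(\<Sum>j\<in>{x\<in>{..<N}. par x = i}. \<psi> (par j)) = (\<Sum>j\<in>{x\<in>{..<N}. par x = i}. \<psi> i)"
      by (rule sum.cong) auto
    also have "\<dots> = of_nat (card {x\<in>{..<N}. par x = i}) * \<psi> i" by simp
    finally have e: "(\<Sum>j\<in>{x\<in>{..<N}. par x = i}. \<psi> (par j)) = of_nat (card {x\<in>{..<N}. par x = i}) * \<psi> i" .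
    have "{x\<in>{..<N}. par x = i} = {j. j < N \<and> par j = i}" by auto
    then show "(\<Sum>j\<in>{x\<in>{..<N}. par x = i}. \<psi> (par j)) = of_nat (card {j. j < N \<and> par j = i}) * \<psi> i"
      using e by simp
  qed
  finally show ?thesis .
qed

lemma children_total_weight:
  fixes w wh :: "nat \<Rightarrow> real" and Nsp par bin Nb :: "nat \<Rightarrow> nat"
  assumes par: "\<And>j. j < N \<Longrightarrow> par j < N"
    and card: "\<And>i. i < N \<Longrightarrow> card {j. j < N \<and> par j = i} = Nsp i"
    and wh: "\<And>j. j < N \<Longrightarrow> wh j = (\<Sum>k\<in>{k. k < N \<and> bin k = bin (par j)}. w k) / real (Nb (bin (par j)))"
    and bin_sum: "\<And>u. u \<in> bin ` {..<N} \<Longrightarrow> (\<Sum>i\<in>{i. i < N \<and> bin i = u}. Nsp i) = Nb u"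
    and bin_pos: "\<And>u. u \<in> bin ` {..<N} \<Longrightarrow> Nb u \<ge> 1"
  shows "(\<Sum>j<N. wh j) = (\<Sum>i<N. w i)"
proof -
  define W where "W u = (\<Sum>k\<in>{k. k < N \<and> bin k = u}. w k)" for u
  define \<phi> where "\<phi> i = W (bin i) / real (Nb (bin i))" for i
  have "(\<Sum>j<N. wh j) = (\<Sum>j<N. \<phi> (par j))"
    by (rule sum.cong) (auto simp: wh \<phi>_def W_def)
  also have "\<dots> = (\<Sum>i<N. of_nat (card {j. j < N \<and> par j = i}) * \<phi> i)"
    by (rule sum_reindex_by_parent) (rule par)
  also have "\<dots> = (\<Sum>i<N. real (Nsp i) * \<phi> i)"
    by (rule sum.cong) (auto simp: card)
  also have "\<dots> = (\<Sum>u\<in>bin ` {..<N}. \<Sum>i\<in>{x\<in>{..<N}. bin x = u}. real (Nsp i) * \<phi> i)"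
    by (rule sum.group[symmetric]) auto
  also have "\<dots> = (\<Sum>u\<in>bin ` {..<N}. W u)"
  proof (rule sum.cong[OF refl])
    fix u assume u: "u \<in> bin ` {..<N}"
    have "(\<Sum>i\<in>{x\<in>{..<N}. bin x = u}. real (Nsp i) * \<phi> i)
        = (\<Sum>i\<in>{i. i < N \<and> bin i = u}. real (Nsp i) * (W u / real (Nb u)))"
      by (rule sum.cong) (auto simp: \<phi>_def)
    also have "\<dots> = real (\<Sum>i\<in>{i. i < N \<and> bin i = u}. Nsp i) * (W u / real (Nb u))"
      by (subst of_nat_sum) (simp only: sum_distrib_right)
    also have "\<dots> = W u" using bin_sum[OF u] bin_pos[OF u] by simp
    finally show "(\<Sum>i\<in>{x\<in>{..<N}. bin x = u}. real (Nsp i) * \<phi> i) = W u" .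
  qed
  also have "\<dots> = (\<Sum>i<N. w i)"
    unfolding W_def
  proof -
    have "(\<Sum>u\<in>bin ` {..<N}. \<Sum>k\<in>{x\<in>{..<N}. bin x = u}. w k) = (\<Sum>i<N. w i)"
      by (rule sum.group) auto
    moreover have "\<And>u. {x\<in>{..<N}. bin x = u} = {k. k < N \<and> bin k = u}" by auto
    ultimately show "(\<Sum>u\<in>bin ` {..<N}. \<Sum>k\<in>{k. k < N \<and> bin k = u}. w k) = (\<Sum>i<N. w i)" by simp
  qed
  finally show ?thesis .
qed

lemma prod_eq_single:
  fixes a :: "nat \<Rightarrow> 'b::comm_monoid_mult"
  assumes "j < N" "\<And>k. k < N \<Longrightarrow> k \<noteq> j \<Longrightarrow> a k = 1"
  shows "(\<Prod>k<N. a k) = a j"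
  using prod.remove[of "{..<N}" j a] prod.neutral[of "{..<N} - {j}" a] assms by auto

lemma ennreal_weighted_sum_finite:
  fixes b :: "nat \<Rightarrow> ennreal"
  assumes "(\<Sum>i<N. ennreal (a i) * b i) \<noteq> \<infinity>" "i < N" "0 < a i"
  shows "b i < \<infinity>"
proof -
  have "ennreal (a i) * b i \<le> (\<Sum>i<N. ennreal (a i) * b i)" by (rule member_le_sum) (use assms in auto)
  with assms show ?thesis by (auto simp: top_unique ennreal_mult_eq_top_iff less_top)
qed

section \<open>Conditional expectations and nonnegative integrals\<close>

lemma subalgebra_trans: "subalgebra A B \<Longrightarrow> subalgebra B C \<Longrightarrow> subalgebra A C"
  unfolding subalgebra_def by auto

lemma prob_space_sigma_finite_subalgebra:
  assumes "prob_space M" "subalgebra M G"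
  shows "sigma_finite_subalgebra M G"
proof -
  interpret prob_space M by fact
  interpret finite_measure_subalgebra M G
    by unfold_locales (use assms in auto)
  show ?thesis by (rule sigma_finite_subalgebra_axioms)
qed

lemma (in sigma_finite_subalgebra) nn_cond_exp_eq_real_cond_exp:
  assumes f: "integrable M f" and nonneg: "\<And>x. 0 \<le> f x"
  shows "AE x in M. nn_cond_exp M F (\<lambda>x. ennreal (f x)) x = ennreal (real_cond_exp M F f x)"
proof -
  have [measurable]: "f \<in> borel_measurable M" using f by simp
  have "(\<integral>\<^sup>+x. 1 * nn_cond_exp M F (\<lambda>x. ennreal (f x)) x \<partial>M) = (\<integral>\<^sup>+x. 1 * ennreal (f x) \<partial>M)"
    by (rule nn_cond_exp_intg) simp_all
  also have "\<dots> < \<infinity>" using integrableD(2)[OF f] nonneg by (simp add: less_top)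
  finally have "AE x in M. nn_cond_exp M F (\<lambda>x. ennreal (f x)) x \<noteq> \<infinity>"
    by (intro nn_integral_PInf_AE) (simp_all add: less_top)
  moreover have "AE x in M. 0 = nn_cond_exp M F (\<lambda>x. ennreal (- f x)) x"
    using nn_cond_exp_F_meas[of "\<lambda>_. 0"] nonneg by (simp add: ennreal_neg)
  ultimately show ?thesis
    by eventually_elim (auto simp: real_cond_exp_def ennreal_enn2real_if)
qed

lemma (in sigma_finite_subalgebra) real_cond_exp_via_finer:
  fixes c :: real
  assumes sub: "subalgebra M G" "subalgebra G F"
    and int[measurable]: "integrable M f" "integrable M u" "integrable M a" "integrable M b"
    and meas[measurable]: "u \<in> borel_measurable F" "b \<in> borel_measurable F"
    and finer: "AE x in M. real_cond_exp M G f x = u x + c * (a x - b x)"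
    and unbiased: "AE x in M. real_cond_exp M F a x = b x"
  shows "AE x in M. real_cond_exp M F f x = u x"
proof -
  interpret G: sigma_finite_subalgebra M G by (rule nested_subalg_is_sigma_finite[OF sub])
  have "AE x in M. real_cond_exp M F f x = real_cond_exp M F (real_cond_exp M G f) x"
    using real_cond_exp_nested_subalg[OF sub int(1)] by eventually_elim simp
  moreover have "AE x in M. real_cond_exp M F (real_cond_exp M G f) x
      = real_cond_exp M F (\<lambda>x. u x + c * (a x - b x)) x"
    by (rule real_cond_exp_cong[OF finer]) simp_all
  moreover have "AE x in M. real_cond_exp M F (\<lambda>x. u x + c * (a x - b x)) x
      = real_cond_exp M F u x + real_cond_exp M F (\<lambda>x. c * (a x - b x)) x"
    by (rule real_cond_exp_add) (use int in auto)
  moreover have "AE x in M. real_cond_exp M F (\<lambda>x. c * (a x - b x)) x = c * real_cond_exp M F (\<lambda>x. a x - b x) x"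
    by (rule real_cond_exp_cmult) (use int in auto)
  moreover have "AE x in M. real_cond_exp M F (\<lambda>x. a x - b x) x = real_cond_exp M F a x - real_cond_exp M F b x"
    by (rule real_cond_exp_diff) (use int in auto)
  moreover have "AE x in M. real_cond_exp M F u x = u x" "AE x in M. real_cond_exp M F b x = b x"
    using int meas by (simp_all add: real_cond_exp_F_meas)
  ultimately show ?thesis using unbiased by eventually_elim simp
qed

text \<open>Both sides integrate \<open>g\<close> against a measure on \<open>X\<close>: the image of \<open>Z \<cdot> M\<close> under \<open>\<xi>\<close>,
  resp. the image under \<open>\<xi>'\<close> followed by \<open>K\<close>; the hypothesis says these measures agree.\<close>
lemma nn_integral_kernel_transfer:
  fixes Z :: "'a \<Rightarrow> ennreal"
  assumes [measurable]: "\<xi> \<in> M \<rightarrow>\<^sub>M X" "\<xi>' \<in> M \<rightarrow>\<^sub>M X" "Z \<in> borel_measurable M"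
    and K: "K \<in> X \<rightarrow>\<^sub>M subprob_algebra X" and nonempty: "space M \<noteq> {}"
    and sets: "\<And>A. A \<in> sets X \<Longrightarrow>
      (\<integral>\<^sup>+\<omega>. Z \<omega> * indicator A (\<xi> \<omega>) \<partial>M) = (\<integral>\<^sup>+\<omega>. Z \<omega> * (\<integral>\<^sup>+y. indicator A y \<partial>K (\<xi>' \<omega>)) \<partial>M)"
    and g[measurable]: "g \<in> borel_measurable X"
  shows "(\<integral>\<^sup>+\<omega>. Z \<omega> * g (\<xi> \<omega>) \<partial>M) = (\<integral>\<^sup>+\<omega>. Z \<omega> * (\<integral>\<^sup>+y. g y \<partial>K (\<xi>' \<omega>)) \<partial>M)"
proof -
  define D where "D = density M Z"
  have "sets (distr D X \<xi>') = sets X" by simp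
  note K' = K[unfolded measurable_cong_sets[OF this[symmetric] refl]]
  have left: "(\<integral>\<^sup>+\<omega>. Z \<omega> * h (\<xi> \<omega>) \<partial>M) = (\<integral>\<^sup>+y. h y \<partial>distr D X \<xi>)"
    if [measurable]: "h \<in> borel_measurable X" for h
  proof -
    have "(\<integral>\<^sup>+y. h y \<partial>distr D X \<xi>) = (\<integral>\<^sup>+\<omega>. h (\<xi> \<omega>) \<partial>D)"
      by (rule nn_integral_distr) (simp_all add: D_def)
    also have "\<dots> = (\<integral>\<^sup>+\<omega>. Z \<omega> * h (\<xi> \<omega>) \<partial>M)"
      unfolding D_def by (rule nn_integral_density) simp_all
    finally show ?thesis ..
  qed
  have right: "(\<integral>\<^sup>+\<omega>. Z \<omega> * (\<integral>\<^sup>+y. h y \<partial>K (\<xi>' \<omega>)) \<partial>M) = (\<integral>\<^sup>+y. h y \<partial>(distr D X \<xi>' \<bind> K))"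
    if [measurable]: "h \<in> borel_measurable X" for h
  proof -
    have [measurable]: "(\<lambda>x. \<integral>\<^sup>+y. h y \<partial>K x) \<in> borel_measurable X"
      by (rule measurable_compose[OF K nn_integral_measurable_subprob_algebra]) simp
    have "(\<integral>\<^sup>+y. h y \<partial>(distr D X \<xi>' \<bind> K)) = (\<integral>\<^sup>+x. (\<integral>\<^sup>+y. h y \<partial>K x) \<partial>distr D X \<xi>')"
      by (rule nn_integral_bind[OF _ K']) simp
    also have "\<dots> = (\<integral>\<^sup>+\<omega>. (\<integral>\<^sup>+y. h y \<partial>K (\<xi>' \<omega>)) \<partial>D)"
      by (rule nn_integral_distr) (simp_all add: D_def)
    also have "\<dots> = (\<integral>\<^sup>+\<omega>. Z \<omega> * (\<integral>\<^sup>+y. h y \<partial>K (\<xi>' \<omega>)) \<partial>M)"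
      unfolding D_def by (rule nn_integral_density) simp_all
    finally show ?thesis ..
  qed
  have "space (distr D X \<xi>') \<noteq> {}" using nonempty measurable_space[of \<xi>' M X] by (auto simp: D_def)
  then have sets_bind_eq: "sets (distr D X \<xi>' \<bind> K) = sets X"
    by (subst sets_bind[where N=X]) (auto dest: measurable_space[OF K] simp: space_subprob_algebra)
  have "distr D X \<xi> = distr D X \<xi>' \<bind> K"
  proof (rule measure_eqI)
    show "sets (distr D X \<xi>) = sets (distr D X \<xi>' \<bind> K)" using sets_bind_eq by simp
  next
    fix A assume "A \<in> sets (distr D X \<xi>)"
    then have [measurable]: "A \<in> sets X" by simp
    have "emeasure (distr D X \<xi>) A = (\<integral>\<^sup>+y. indicator A y \<partial>distr D X \<xi>)" by simp
    also have "\<dots> = (\<integral>\<^sup>+y. indicator A y \<partial>(distr D X \<xi>' \<bind> K))"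
      using left[of "indicator A"] right[of "indicator A"] sets[of A] by simp
    also have "\<dots> = emeasure (distr D X \<xi>' \<bind> K) A"
      using sets_bind_eq by (simp add: nn_integral_indicator)
    finally show "emeasure (distr D X \<xi>) A = emeasure (distr D X \<xi>' \<bind> K) A" .
  qed
  then show ?thesis using left[OF g] right[OF g] by simp
qed

lemma integral_eq_of_nn_integral_eq:
  fixes L R :: "'a \<Rightarrow> real"
  assumes [measurable]: "L \<in> borel_measurable M" "R \<in> borel_measurable M"
    and nonneg: "AE x in M. 0 \<le> L x" "AE x in M. 0 \<le> R x"
    and eq: "(\<integral>\<^sup>+x. ennreal (L x) \<partial>M) = (\<integral>\<^sup>+x. ennreal (R x) \<partial>M)"
    and finite: "(\<integral>\<^sup>+x. ennreal (R x) \<partial>M) < \<infinity>"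
  shows "integrable M L" "integrable M R" "(\<integral>x. L x \<partial>M) = (\<integral>x. R x \<partial>M)"
proof -
  show "integrable M L" "integrable M R"
    by (rule integrableI_nonneg; use nonneg eq finite in simp)+
  show "(\<integral>x. L x \<partial>M) = (\<integral>x. R x \<partial>M)"
    using integral_eq_nn_integral[of L M] integral_eq_nn_integral[of R M] nonneg eq by simp
qed

lemma (in sigma_finite_subalgebra) real_cond_exp_eq_of_nn_integral_eq:
  fixes f g :: "'a \<Rightarrow> real"
  assumes [measurable]: "f \<in> borel_measurable M" "g \<in> borel_measurable F"
    and nonneg: "AE x in M. 0 \<le> f x" "AE x in M. 0 \<le> g x"
    and eq: "\<And>A. A \<in> sets F \<Longrightarrow>
      (\<integral>\<^sup>+x. indicator A x * ennreal (f x) \<partial>M) = (\<integral>\<^sup>+x. indicator A x * ennreal (g x) \<partial>M)"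
    and finite: "(\<integral>\<^sup>+x. ennreal (g x) \<partial>M) < \<infinity>"
  shows "integrable M f" "integrable M g" "AE x in M. real_cond_exp M F f x = g x"
proof -
  have gM[measurable]: "g \<in> borel_measurable M" by (rule measurable_from_subalg[OF subalg]) simp
  have restricted: "integrable M (\<lambda>x. indicator A x * f x) \<and> integrable M (\<lambda>x. indicator A x * g x)
      \<and> (\<integral>x. indicator A x * f x \<partial>M) = (\<integral>x. indicator A x * g x \<partial>M)" if A: "A \<in> sets F" for A
  proof -
    have [measurable]: "A \<in> sets M" using A subalg by (auto simp: subalgebra_def)
    have ind: "ennreal (indicator A x * h x) = indicator A x * ennreal (h x)" for h :: "'a \<Rightarrow> real" and x
      by (simp split: split_indicator)
    have eqA: "(\<integral>\<^sup>+x. ennreal (indicator A x * f x) \<partial>M) = (\<integral>\<^sup>+x. ennreal (indicator A x * g x) \<partial>M)"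
      using eq[OF A] by (simp only: ind)
    have "(\<integral>\<^sup>+x. ennreal (indicator A x * g x) \<partial>M) \<le> (\<integral>\<^sup>+x. ennreal (g x) \<partial>M)"
      by (intro nn_integral_mono) (simp split: split_indicator)
    then have finA: "(\<integral>\<^sup>+x. ennreal (indicator A x * g x) \<partial>M) < \<infinity>"
      using finite by (rule le_less_trans)
    have "AE x in M. 0 \<le> indicator A x * f x" using nonneg(1) by eventually_elim simp
    moreover have "AE x in M. 0 \<le> indicator A x * g x" using nonneg(2) by eventually_elim simp
    moreover have "(\<lambda>x. indicator A x * f x) \<in> borel_measurable M" "(\<lambda>x. indicator A x * g x) \<in> borel_measurable M"
      by measurable
    ultimately show ?thesis using integral_eq_of_nn_integral_eq[OF _ _ _ _ eqA finA] by blast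
  qed
  have "space M \<in> sets F" using subalg by (metis sets.top subalgebra_def)
  from restricted[OF this] show int: "integrable M f" "integrable M g"
    by (auto cong: Bochner_Integration.integrable_cong)
  show "AE x in M. real_cond_exp M F f x = g x"
    by (rule real_cond_exp_charact) (use int restricted in \<open>simp_all add: set_lebesgue_integral_def\<close>)
qed

section \<open>Markov kernels acting on functions\<close>

locale markov_kernel =
  fixes X :: "'x measure" and K :: "'x \<Rightarrow> 'x measure"
  assumes K: "K \<in> X \<rightarrow>\<^sub>M prob_algebra X"
begin

lemma K_prob: "x \<in> space X \<Longrightarrow> prob_space (K x)" "x \<in> space X \<Longrightarrow> sets (K x) = sets X"
  using measurable_space[OF K] by (auto simp: space_prob_algebra)

lemma space_K: "x \<in> space X \<Longrightarrow> space (K x) = space X"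
  using K_prob(2) sets_eq_imp_space_eq by blast

lemma K_subprob: "K \<in> X \<rightarrow>\<^sub>M subprob_algebra X"
  by (rule measurable_prob_algebraD[OF K])

lemma measurable_K_iff: "x \<in> space X \<Longrightarrow> g \<in> borel_measurable (K x) \<longleftrightarrow> g \<in> borel_measurable X"
  using measurable_cong_sets[OF K_prob(2) refl] by blast

definition kernel_nn :: "('x \<Rightarrow> ennreal) \<Rightarrow> 'x \<Rightarrow> ennreal" where
  "kernel_nn g x = (\<integral>\<^sup>+y. g y \<partial>K x)"

lemma kernel_nn_measurable[measurable]: "g \<in> borel_measurable X \<Longrightarrow> kernel_nn g \<in> borel_measurable X"
  unfolding kernel_nn_def by (rule measurable_compose[OF K_subprob nn_integral_measurable_subprob_algebra])

lemma kernel_app_measurable[measurable]: "g \<in> borel_measurable X \<Longrightarrow> kernel_app K g \<in> borel_measurable X"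
  unfolding kernel_app_def[abs_def] by (rule measurable_compose[OF K_subprob integral_measurable_subprob_algebra])

lemma kernel_nn_cong: "x \<in> space X \<Longrightarrow> (\<And>y. y \<in> space X \<Longrightarrow> f y = g y) \<Longrightarrow> kernel_nn f x = kernel_nn g x"
  unfolding kernel_nn_def by (rule nn_integral_cong) (simp add: space_K)

lemma kernel_nn_mono: "(\<And>y. y \<in> space X \<Longrightarrow> f y \<le> g y) \<Longrightarrow> x \<in> space X \<Longrightarrow> kernel_nn f x \<le> kernel_nn g x"
  unfolding kernel_nn_def by (rule nn_integral_mono) (simp add: space_K)

lemma kernel_nn_indicator: "x \<in> space X \<Longrightarrow> A \<in> sets X \<Longrightarrow> kernel_nn (indicator A) x = ennreal (measure (K x) A)"
proof -
  assume x: "x \<in> space X" and A: "A \<in> sets X"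
  interpret Kx: prob_space "K x" using K_prob(1)[OF x] .
  show ?thesis unfolding kernel_nn_def using A K_prob(2)[OF x] by (simp add: Kx.emeasure_eq_measure)
qed

lemma kernel_nn_add_const:
  assumes "x \<in> space X" "g \<in> borel_measurable X"
  shows "kernel_nn (\<lambda>y. g y + c) x = kernel_nn g x + c"
proof -
  interpret Kx: prob_space "K x" using K_prob(1)[OF assms(1)] .
  have "kernel_nn (\<lambda>y. g y + c) x = kernel_nn g x + (\<integral>\<^sup>+y. c \<partial>K x)"
    unfolding kernel_nn_def by (rule nn_integral_add) (use assms in \<open>simp_all add: measurable_K_iff\<close>)
  then show ?thesis by (simp add: Kx.emeasure_space_1)
qed

lemma kernel_nn_pow_measurable[measurable]: "g \<in> borel_measurable X \<Longrightarrow> (kernel_nn ^^ n) g \<in> borel_measurable X"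
  by (induction n) auto

lemma kernel_nn_pow_mono: "(\<And>y. y \<in> space X \<Longrightarrow> f y \<le> g y) \<Longrightarrow> x \<in> space X \<Longrightarrow> (kernel_nn ^^ n) f x \<le> (kernel_nn ^^ n) g x"
proof (induction n arbitrary: x)
  case (Suc n) then show ?case by (simp add: kernel_nn_mono)
qed simp

lemma kernel_nn_pow_add_const:
  "g \<in> borel_measurable X \<Longrightarrow> x \<in> space X \<Longrightarrow> (kernel_nn ^^ n) (\<lambda>y. g y + c) x = (kernel_nn ^^ n) g x + c"
proof (induction n arbitrary: x)
  case (Suc n)
  have "(kernel_nn ^^ Suc n) (\<lambda>y. g y + c) x = kernel_nn ((kernel_nn ^^ n) (\<lambda>y. g y + c)) x" by simp
  also have "\<dots> = kernel_nn (\<lambda>y. (kernel_nn ^^ n) g y + c) x"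
    by (rule kernel_nn_cong) (use Suc in auto)
  also have "\<dots> = kernel_nn ((kernel_nn ^^ n) g) x + c"
    by (rule kernel_nn_add_const) (use Suc in auto)
  finally show ?case by simp
qed simp

lemma integrable_K_of_kernel_nn_finite:
  assumes x: "x \<in> space X" and g: "g \<in> borel_measurable X" and fin: "kernel_nn (\<lambda>y. ennreal \<bar>g y\<bar>) x < \<infinity>"
  shows "integrable (K x) g"
proof (rule integrableI_bounded)
  show "g \<in> borel_measurable (K x)" using g x by (simp only: measurable_K_iff)
  show "(\<integral>\<^sup>+y. ennreal (norm (g y)) \<partial>K x) < \<infinity>" using fin by (simp add: kernel_nn_def)
qed

lemma ennreal_kernel_app:
  assumes x: "x \<in> space X" and h: "h \<in> borel_measurable X" and nonneg: "\<And>y. 0 \<le> h y"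
    and fin: "kernel_nn (\<lambda>y. ennreal (h y)) x < \<infinity>"
  shows "ennreal (kernel_app K h x) = kernel_nn (\<lambda>y. ennreal (h y)) x"
proof -
  have "integrable (K x) h"
    by (rule integrable_K_of_kernel_nn_finite[OF x h]) (use fin nonneg in \<open>simp add: abs_of_nonneg\<close>)
  then show ?thesis unfolding kernel_app_def kernel_nn_def
    by (rule nn_integral_eq_integral[symmetric]) (simp add: nonneg)
qed

lemma kernel_app_diff:
  "integrable (K x) a \<Longrightarrow> integrable (K x) b \<Longrightarrow>
    kernel_app K (\<lambda>y. a y - b y) x = kernel_app K a x - kernel_app K b x"
  unfolding kernel_app_def by (rule Bochner_Integration.integral_diff)

lemma kernel_app_nonneg: "(\<And>y. y \<in> space X \<Longrightarrow> g y \<ge> 0) \<Longrightarrow> x \<in> space X \<Longrightarrow> kernel_app K g x \<ge> 0"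
  unfolding kernel_app_def by (rule Bochner_Integration.integral_nonneg) (simp add: space_K)

lemma abs_kernel_app_le: "ennreal \<bar>kernel_app K g x\<bar> \<le> kernel_nn (\<lambda>y. ennreal \<bar>g y\<bar>) x"
  unfolding kernel_app_def kernel_nn_def
proof (cases "integrable (K x) g")
  case True
  then show "ennreal \<bar>integral\<^sup>L (K x) g\<bar> \<le> (\<integral>\<^sup>+ y. ennreal \<bar>g y\<bar> \<partial>K x)"
    using integral_norm_bound_ennreal[OF True] by simp
qed (simp add: not_integrable_integral_eq)

lemma kernel_pow_0: "kernel_pow K 0 g = g"
  unfolding kernel_pow_def by simp

lemma kernel_pow_Suc: "kernel_pow K (Suc n) g = kernel_app K (kernel_pow K n g)"
  unfolding kernel_pow_def by simp

lemma kernel_pow_measurable[measurable]: "g \<in> borel_measurable X \<Longrightarrow> kernel_pow K n g \<in> borel_measurable X"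
  by (induction n) (auto simp: kernel_pow_Suc kernel_pow_0)

lemma abs_kernel_pow_le: "x \<in> space X \<Longrightarrow> ennreal \<bar>kernel_pow K n g x\<bar> \<le> (kernel_nn ^^ n) (\<lambda>y. ennreal \<bar>g y\<bar>) x"
proof (induction n arbitrary: x)
  case (Suc n)
  have "ennreal \<bar>kernel_pow K (Suc n) g x\<bar> \<le> kernel_nn (\<lambda>y. ennreal \<bar>kernel_pow K n g y\<bar>) x"
    unfolding kernel_pow_Suc by (rule abs_kernel_app_le)
  also have "\<dots> \<le> kernel_nn ((kernel_nn ^^ n) (\<lambda>y. ennreal \<bar>g y\<bar>)) x"
    by (rule kernel_nn_mono) (use Suc in auto)
  finally show ?case by simp
qed (simp add: kernel_pow_0)

lemma meas_kpow_prob_algebra: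
  "\<nu> \<in> space (prob_algebra X) \<Longrightarrow> meas_kpow \<nu> K t \<in> space (prob_algebra X)"
proof (induction t)
  case (Suc t)
  have "meas_kpow \<nu> K (Suc t) = meas_kpow \<nu> K t \<bind> K" unfolding meas_kpow_def by simp
  then show ?case using prob_space_bind'[OF Suc.IH[OF Suc.prems] K] sets_bind'[OF Suc.IH[OF Suc.prems] K]
    by (simp add: space_prob_algebra)
qed (simp add: meas_kpow_def)

end

section \<open>Unbiasedness of the splitting and evolution steps\<close>

locale weighted_ensemble = markov_kernel X K
  for X :: "'x measure" and K :: "'x \<Rightarrow> 'x measure" +
  fixes M :: "'a measure" and \<mu>0 :: "'x measure" and N :: nat
    and F Fh :: "nat \<Rightarrow> 'a measure"
    and xi xih :: "nat \<Rightarrow> nat \<Rightarrow> 'a \<Rightarrow> 'x" and w wh C :: "nat \<Rightarrow> nat \<Rightarrow> 'a \<Rightarrow> real"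
    and Nsp par bin Nb :: "nat \<Rightarrow> nat \<Rightarrow> 'a \<Rightarrow> nat"
  assumes M: "prob_space M"
    and mu0: "prob_space \<mu>0" "sets \<mu>0 = sets X"
    and N: "N \<ge> 1"
    and WE: "WE_method M X K \<mu>0 N F Fh xi w xih wh C Nsp par bin Nb"
begin

interpretation P: prob_space M by (rule M)

lemma subalg_F: "subalgebra M (F t)" and subalg_Fh: "subalgebra M (Fh t)"
  and subalg_Fh_F: "subalgebra (Fh t) (F t)" and subalg_F_Suc_Fh: "subalgebra (F (Suc t)) (Fh t)"
  using WE unfolding WE_method_def by auto

lemma sigma_finite_F: "sigma_finite_subalgebra M (F t)" by (rule prob_space_sigma_finite_subalgebra[OF M subalg_F])
lemma sigma_finite_Fh: "sigma_finite_subalgebra M (Fh t)" by (rule prob_space_sigma_finite_subalgebra[OF M subalg_Fh])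

lemma xi_measF: "i < N \<Longrightarrow> xi t i \<in> F t \<rightarrow>\<^sub>M X"
  and w_measF: "i < N \<Longrightarrow> w t i \<in> borel_measurable (F t)"
  and C_measF: "i < N \<Longrightarrow> C t i \<in> borel_measurable (F t)"
  and w_nn: "i < N \<Longrightarrow> \<omega> \<in> space M \<Longrightarrow> w t i \<omega> \<ge> 0"
  and C_pos: "i < N \<Longrightarrow> \<omega> \<in> space M \<Longrightarrow> C t i \<omega> > 0"
  using WE unfolding WE_method_def by auto

lemma xih_measFh: "j < N \<Longrightarrow> xih t j \<in> Fh t \<rightarrow>\<^sub>M X"
  and wh_measFh: "j < N \<Longrightarrow> wh t j \<in> borel_measurable (Fh t)"
  using WE unfolding WE_method_def by auto

lemma C_formula: "i < N \<Longrightarrow> \<omega> \<in> space M \<Longrightarrow>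
        C t i \<omega> = real (Nb t (bin t i \<omega>) \<omega>) * w t i \<omega> /
                   (\<Sum>k\<in>{k. k < N \<and> bin t k \<omega> = bin t i \<omega>}. w t k \<omega>)"
  using WE unfolding WE_method_def by auto

lemma w_pos: "i < N \<Longrightarrow> \<omega> \<in> space M \<Longrightarrow> w t i \<omega> > 0"
  using C_pos[of i \<omega> t] C_formula[of i \<omega> t] w_nn[of i \<omega> t]
  by (cases "w t i \<omega> = 0") auto

lemma offspring_meas: "i < N \<Longrightarrow> Nsp t i \<in> M \<rightarrow>\<^sub>M count_space UNIV"
  and offspring_integrable: "i < N \<Longrightarrow> integrable M (\<lambda>\<omega>. real (Nsp t i \<omega>))"
  and offspring_cond_exp: "i < N \<Longrightarrow> AE \<omega> in M. real_cond_exp M (F t) (\<lambda>\<omega>. real (Nsp t i \<omega>)) \<omega> = C t i \<omega>"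
  using WE unfolding WE_method_def by auto

lemma children: "AE \<omega> in M. (\<forall>j<N. par t j \<omega> < N) \<and>
          (\<forall>i<N. card {j. j < N \<and> par t j \<omega> = i} = Nsp t i \<omega>) \<and>
          (\<forall>j<N. xih t j \<omega> = xi t (par t j \<omega>) \<omega>
                 \<and> wh t j \<omega> = w t (par t j \<omega>) \<omega> / C t (par t j \<omega>) \<omega>
                 \<and> wh t j \<omega> = (\<Sum>k\<in>{k. k < N \<and> bin t k \<omega> = bin t (par t j \<omega>) \<omega>}. w t k \<omega>)
                              / real (Nb t (bin t (par t j \<omega>) \<omega>) \<omega>))"
  using WE unfolding WE_method_def by auto

lemma bin_offspring_sum: "AE \<omega> in M. \<forall>u\<in>(\<lambda>i. bin t i \<omega>) ` {..<N}.
          (\<Sum>i\<in>{i. i < N \<and> bin t i \<omega> = u}. Nsp t i \<omega>) = Nb t u \<omega>"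
  using WE unfolding WE_method_def by auto

lemma bin_size_pos: "\<omega> \<in> space M \<Longrightarrow> u\<in>(\<lambda>i. bin t i \<omega>) ` {..<N} \<Longrightarrow> Nb t u \<omega> \<ge> 1"
proof -
  have "\<forall>t. \<forall>\<omega>\<in>space M. \<forall>u\<in>(\<lambda>i. bin t i \<omega>) ` {..<N}. Nb t u \<omega> \<ge> 1"
    using WE unfolding WE_method_def by (elim conjE) assumption
  then show "\<omega> \<in> space M \<Longrightarrow> u\<in>(\<lambda>i. bin t i \<omega>) ` {..<N} \<Longrightarrow> Nb t u \<omega> \<ge> 1" by blast
qed

lemma evolution_prod_cond_exp: "(\<forall>j<N. A j \<in> sets X) \<Longrightarrow>
        (AE \<omega> in M. real_cond_exp M (Fh t)
                       (\<lambda>\<omega>. \<Prod>j<N. indicator (A j) (xi (Suc t) j \<omega>)) \<omega>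
                     = (\<Prod>j<N. measure (K (xih t j \<omega>)) (A j)))"
  and w_Suc: "j < N \<Longrightarrow> \<omega> \<in> space M \<Longrightarrow> w (Suc t) j \<omega> = wh t j \<omega>"
  and xi0_distr: "i < N \<Longrightarrow> distr M X (xi 0 i) = \<mu>0"
  and w0: "i < N \<Longrightarrow> \<omega> \<in> space M \<Longrightarrow> w 0 i \<omega> = 1 / real N"
  using WE unfolding WE_method_def by auto

lemma xi_meas: "i < N \<Longrightarrow> xi t i \<in> M \<rightarrow>\<^sub>M X"
  by (rule measurable_from_subalg[OF subalg_F xi_measF])
lemma w_meas: "i < N \<Longrightarrow> w t i \<in> borel_measurable M"
  by (rule measurable_from_subalg[OF subalg_F w_measF])
lemma xih_meas: "i < N \<Longrightarrow> xih t i \<in> M \<rightarrow>\<^sub>M X"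
  by (rule measurable_from_subalg[OF subalg_Fh xih_measFh])
lemma wh_meas: "i < N \<Longrightarrow> wh t i \<in> borel_measurable M"
  by (rule measurable_from_subalg[OF subalg_Fh wh_measFh])

lemma xi_space: "i < N \<Longrightarrow> \<omega> \<in> space M \<Longrightarrow> xi t i \<omega> \<in> space X"
  using measurable_space[OF xi_meas] by blast
lemma xih_space: "i < N \<Longrightarrow> \<omega> \<in> space M \<Longrightarrow> xih t i \<omega> \<in> space X"
  using measurable_space[OF xih_meas] by blast

definition wsum :: "nat \<Rightarrow> ('x \<Rightarrow> real) \<Rightarrow> 'a \<Rightarrow> real" where
  "wsum t g \<omega> = (\<Sum>i<N. w t i \<omega> * g (xi t i \<omega>))"
definition child_wsum :: "nat \<Rightarrow> ('x \<Rightarrow> real) \<Rightarrow> 'a \<Rightarrow> real" where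
  "child_wsum t g \<omega> = (\<Sum>j<N. wh t j \<omega> * g (xih t j \<omega>))"

lemma wsum_measF: "g \<in> borel_measurable X \<Longrightarrow> wsum t g \<in> borel_measurable (F t)"
  unfolding wsum_def[abs_def]
proof (intro borel_measurable_sum)
  fix i assume "g \<in> borel_measurable X" "i \<in> {..<N}"
  then have [measurable]: "g \<in> borel_measurable X" "xi t i \<in> F t \<rightarrow>\<^sub>M X" "w t i \<in> borel_measurable (F t)"
    using xi_measF w_measF by auto
  show "(\<lambda>\<omega>. w t i \<omega> * g (xi t i \<omega>)) \<in> borel_measurable (F t)" by measurable
qed

lemma child_wsum_measFh: "g \<in> borel_measurable X \<Longrightarrow> child_wsum t g \<in> borel_measurable (Fh t)"
  unfolding child_wsum_def[abs_def]
proof (intro borel_measurable_sum)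
  fix i assume "g \<in> borel_measurable X" "i \<in> {..<N}"
  then have [measurable]: "g \<in> borel_measurable X" "xih t i \<in> Fh t \<rightarrow>\<^sub>M X" "wh t i \<in> borel_measurable (Fh t)"
    using xih_measFh wh_measFh by auto
  show "(\<lambda>\<omega>. wh t i \<omega> * g (xih t i \<omega>)) \<in> borel_measurable (Fh t)" by measurable
qed

lemma wsum_meas[measurable]: "g \<in> borel_measurable X \<Longrightarrow> wsum t g \<in> borel_measurable M"
  by (rule measurable_from_subalg[OF subalg_F wsum_measF])
lemma child_wsum_meas[measurable]: "g \<in> borel_measurable X \<Longrightarrow> child_wsum t g \<in> borel_measurable M"
  by (rule measurable_from_subalg[OF subalg_Fh child_wsum_measFh])

lemma subalg_F_mono: "s \<le> t \<Longrightarrow> subalgebra (F t) (F s)"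
proof (induction t)
  case 0 then show ?case by (simp add: subalgebra_def)
next
  case (Suc t)
  show ?case
  proof (cases "s = Suc t")
    case True then show ?thesis by (simp add: subalgebra_def)
  next
    case False
    then have "subalgebra (F t) (F s)" using Suc by auto
    then show ?thesis using subalgebra_trans[OF subalgebra_trans[OF subalg_F_Suc_Fh subalg_Fh_F]] by blast
  qed
qed

lemma subalg_Fh_F_le: "s \<le> t \<Longrightarrow> subalgebra (Fh t) (F s)"
  using subalgebra_trans[OF subalg_Fh_F subalg_F_mono] by blast

lemma wh_pos_AE: "AE \<omega> in M. \<forall>j<N. wh t j \<omega> > 0"
proof -
  have "AE \<omega> in M. \<omega> \<in> space M" by simp
  with children[of t] show ?thesis
  proof eventually_elim
    case (elim \<omega>)
    show ?case
    proof (intro allI impI)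
      fix j assume j: "j < N"
      then have p: "par t j \<omega> < N" and e: "wh t j \<omega> = w t (par t j \<omega>) \<omega> / C t (par t j \<omega>) \<omega>"
        using elim by auto
      show "wh t j \<omega> > 0" unfolding e using w_pos[OF p elim(2)] C_pos[OF p elim(2)] by simp
    qed
  qed
qed

lemma weights_sum_one: "AE \<omega> in M. (\<Sum>i<N. w t i \<omega>) = 1"
proof (induction t)
  case 0
  have "AE \<omega> in M. \<omega> \<in> space M" by simp
  then show ?case
  proof eventually_elim
    case (elim \<omega>)
    then have "(\<Sum>i<N. w 0 i \<omega>) = (\<Sum>i<N. 1 / real N)" by (intro sum.cong) (auto simp: w0)
    then show ?case using N by simp
  qed
next
  case (Suc t)
  have "AE \<omega> in M. \<omega> \<in> space M" by simp
  with Suc children[of t] bin_offspring_sum[of t] show ?case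
  proof eventually_elim
    case (elim \<omega>)
    have "(\<Sum>i<N. w (Suc t) i \<omega>) = (\<Sum>i<N. wh t i \<omega>)" by (intro sum.cong) (auto simp: w_Suc elim)
    also have "\<dots> = (\<Sum>i<N. w t i \<omega>)"
    proof (rule children_total_weight[where par="\<lambda>j. par t j \<omega>" and Nsp="\<lambda>i. Nsp t i \<omega>"
          and bin="\<lambda>i. bin t i \<omega>" and Nb="\<lambda>u. Nb t u \<omega>"])
      show "\<And>u. u \<in> (\<lambda>i. bin t i \<omega>) ` {..<N} \<Longrightarrow> 1 \<le> Nb t u \<omega>" using bin_size_pos elim by blast
    qed (use elim in auto)
    finally show ?case using elim by simp
  qed
qed

lemma wsum_diff: "wsum t (\<lambda>y. a y - b y) \<omega> = wsum t a \<omega> - wsum t b \<omega>"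
  unfolding wsum_def by (simp add: right_diff_distrib sum_subtractf)

lemma child_wsum_diff: "child_wsum t (\<lambda>y. a y - b y) \<omega> = child_wsum t a \<omega> - child_wsum t b \<omega>"
  unfolding child_wsum_def by (simp add: right_diff_distrib sum_subtractf)

lemma ennreal_wsum:
  assumes "\<omega> \<in> space M" "\<And>y. y \<in> space X \<Longrightarrow> 0 \<le> h y"
  shows "ennreal (wsum t h \<omega>) = (\<Sum>i<N. ennreal (w t i \<omega>) * ennreal (h (xi t i \<omega>)))"
  unfolding wsum_def using assms w_nn xi_space
  by (subst sum_ennreal[symmetric]) (auto intro!: sum.cong simp: ennreal_mult)

lemma ennreal_child_wsum:
  assumes "\<And>y. y \<in> space X \<Longrightarrow> 0 \<le> h y"
  shows "AE \<omega> in M. ennreal (child_wsum t h \<omega>) = (\<Sum>j<N. ennreal (wh t j \<omega>) * ennreal (h (xih t j \<omega>)))"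
  using wh_pos_AE[of t] AE_space
proof eventually_elim
  case (elim \<omega>)
  then show ?case unfolding child_wsum_def using assms xih_space
    by (subst sum_ennreal[symmetric]) (auto intro!: sum.cong simp: ennreal_mult less_imp_le)
qed

lemma offspring_nn_integral:
  assumes i: "i < N" and Z[measurable]: "Z \<in> borel_measurable (F t)"
  shows "(\<integral>\<^sup>+\<omega>. Z \<omega> * ennreal (real (Nsp t i \<omega>)) \<partial>M) = (\<integral>\<^sup>+\<omega>. Z \<omega> * ennreal (C t i \<omega>) \<partial>M)"
proof -
  interpret S: sigma_finite_subalgebra M "F t" by (rule sigma_finite_F)
  have [measurable]: "Nsp t i \<in> M \<rightarrow>\<^sub>M count_space UNIV" using offspring_meas[OF i] .
  have "(\<integral>\<^sup>+\<omega>. Z \<omega> * ennreal (real (Nsp t i \<omega>)) \<partial>M)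
      = (\<integral>\<^sup>+\<omega>. Z \<omega> * nn_cond_exp M (F t) (\<lambda>\<omega>. ennreal (real (Nsp t i \<omega>))) \<omega> \<partial>M)"
    by (rule S.nn_cond_exp_intg[symmetric]) simp_all
  also have "\<dots> = (\<integral>\<^sup>+\<omega>. Z \<omega> * ennreal (C t i \<omega>) \<partial>M)"
  proof (rule nn_integral_cong_AE)
    show "AE \<omega> in M. Z \<omega> * nn_cond_exp M (F t) (\<lambda>\<omega>. ennreal (real (Nsp t i \<omega>))) \<omega> = Z \<omega> * ennreal (C t i \<omega>)"
      using S.nn_cond_exp_eq_real_cond_exp[OF offspring_integrable[where t=t, OF i] of_nat_0_le_iff] offspring_cond_exp[OF i, of t]
      by eventually_elim simp
  qed
  finally show ?thesis .
qed

lemma children_sum_eq_offspring_sum: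
  "AE \<omega> in M. (\<Sum>j<N. ennreal (wh t j \<omega>) * g (xih t j \<omega>))
      = (\<Sum>i<N. ennreal (real (Nsp t i \<omega>)) * (ennreal (w t i \<omega> / C t i \<omega>) * g (xi t i \<omega>)))"
  using children[of t]
proof eventually_elim
  case (elim \<omega>)
  have "(\<Sum>j<N. ennreal (wh t j \<omega>) * g (xih t j \<omega>))
      = (\<Sum>j<N. (\<lambda>i. ennreal (w t i \<omega> / C t i \<omega>) * g (xi t i \<omega>)) (par t j \<omega>))"
    by (rule sum.cong) (use elim in auto)
  also have "\<dots> = (\<Sum>i<N. of_nat (Nsp t i \<omega>) * (ennreal (w t i \<omega> / C t i \<omega>) * g (xi t i \<omega>)))"
    by (subst sum_reindex_by_parent) (use elim in auto)
  finally show ?case by (simp add: ennreal_of_nat_eq_real_of_nat)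
qed

lemma splitting_nn_integral:
  assumes Z[measurable]: "Z \<in> borel_measurable (F t)" and g[measurable]: "g \<in> borel_measurable X"
  shows "(\<integral>\<^sup>+\<omega>. Z \<omega> * (\<Sum>j<N. ennreal (wh t j \<omega>) * g (xih t j \<omega>)) \<partial>M)
       = (\<integral>\<^sup>+\<omega>. Z \<omega> * (\<Sum>i<N. ennreal (w t i \<omega>) * g (xi t i \<omega>)) \<partial>M)"
proof -
  define \<psi> where "\<psi> i \<omega> = Z \<omega> * (ennreal (w t i \<omega> / C t i \<omega>) * g (xi t i \<omega>))" for i \<omega>
  have \<psi>F: "\<psi> i \<in> borel_measurable (F t)" if "i < N" for i
    using xi_measF[OF that] w_measF[OF that] C_measF[OF that] unfolding \<psi>_def by measurable
  have [measurable]: "\<psi> i \<in> borel_measurable M" "Nsp t i \<in> M \<rightarrow>\<^sub>M count_space UNIV" if "i < N" for i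
    using measurable_from_subalg[OF subalg_F \<psi>F[OF that]] offspring_meas[OF that] by auto
  have "(\<integral>\<^sup>+\<omega>. Z \<omega> * (\<Sum>j<N. ennreal (wh t j \<omega>) * g (xih t j \<omega>)) \<partial>M)
      = (\<integral>\<^sup>+\<omega>. (\<Sum>i<N. \<psi> i \<omega> * ennreal (real (Nsp t i \<omega>))) \<partial>M)"
  proof (rule nn_integral_cong_AE)
    show "AE \<omega> in M. Z \<omega> * (\<Sum>j<N. ennreal (wh t j \<omega>) * g (xih t j \<omega>))
        = (\<Sum>i<N. \<psi> i \<omega> * ennreal (real (Nsp t i \<omega>)))"
      using children_sum_eq_offspring_sum[of t g]
      by eventually_elim (simp add: \<psi>_def sum_distrib_left mult_ac)
  qed
  also have "\<dots> = (\<Sum>i<N. \<integral>\<^sup>+\<omega>. \<psi> i \<omega> * ennreal (real (Nsp t i \<omega>)) \<partial>M)"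
    by (rule nn_integral_sum) simp
  also have "\<dots> = (\<Sum>i<N. \<integral>\<^sup>+\<omega>. \<psi> i \<omega> * ennreal (C t i \<omega>) \<partial>M)"
    by (intro sum.cong refl offspring_nn_integral \<psi>F) simp_all
  also have "\<dots> = (\<Sum>i<N. \<integral>\<^sup>+\<omega>. Z \<omega> * (ennreal (w t i \<omega>) * g (xi t i \<omega>)) \<partial>M)"
  proof (intro sum.cong refl nn_integral_cong)
    fix i \<omega> assume "i \<in> {..<N}" "\<omega> \<in> space M"
    then have "C t i \<omega> > 0" "w t i \<omega> \<ge> 0" using C_pos w_nn by auto
    then have "ennreal (w t i \<omega> / C t i \<omega>) * ennreal (C t i \<omega>) = ennreal (w t i \<omega>)"
      by (simp add: ennreal_mult''[symmetric])
    then show "\<psi> i \<omega> * ennreal (C t i \<omega>) = Z \<omega> * (ennreal (w t i \<omega>) * g (xi t i \<omega>))"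
      unfolding \<psi>_def by (metis mult.assoc mult.commute)
  qed
  also have "\<dots> = (\<integral>\<^sup>+\<omega>. Z \<omega> * (\<Sum>i<N. ennreal (w t i \<omega>) * g (xi t i \<omega>)) \<partial>M)"
    using measurable_from_subalg[OF subalg_F Z] xi_meas w_meas
    by (subst nn_integral_sum[symmetric]) (auto simp: sum_distrib_left)
  finally show ?thesis .
qed

lemma evolution_cond_prob:
  assumes j: "j < N" and A: "A \<in> sets X"
  shows "AE \<omega> in M. real_cond_exp M (Fh t) (\<lambda>\<omega>. indicator A (xi (Suc t) j \<omega>)) \<omega>
                  = measure (K (xih t j \<omega>)) A"
proof -
  interpret S: sigma_finite_subalgebra M "Fh t" by (rule sigma_finite_Fh)
  \<comment> \<open>With all other sets equal to \<open>space X\<close>, the product in \<open>WE_method\<close> isolates particle \<open>j\<close>.\<close>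
  define B where "B k = (if k = j then A else space X)" for k
  have [measurable]: "A \<in> sets X" "B k \<in> sets X" for k
    using A by (auto simp: B_def)
  have [measurable]: "xi (Suc t) j \<in> M \<rightarrow>\<^sub>M X" using xi_meas[OF j] .
  have prod_meas: "(\<lambda>\<omega>. \<Prod>k<N. indicator (B k) (xi (Suc t) k \<omega>) :: real) \<in> borel_measurable M"
  proof (rule borel_measurable_prod)
    fix k assume "k \<in> {..<N}"
    then have [measurable]: "xi (Suc t) k \<in> M \<rightarrow>\<^sub>M X" using xi_meas by auto
    show "(\<lambda>\<omega>. indicator (B k) (xi (Suc t) k \<omega>) :: real) \<in> borel_measurable M" by measurable
  qed
  have "AE \<omega> in M. real_cond_exp M (Fh t) (\<lambda>\<omega>. indicator A (xi (Suc t) j \<omega>)) \<omega>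
      = real_cond_exp M (Fh t) (\<lambda>\<omega>. \<Prod>k<N. indicator (B k) (xi (Suc t) k \<omega>)) \<omega>"
  proof (rule S.real_cond_exp_cong)
    show "AE \<omega> in M. indicator A (xi (Suc t) j \<omega>) = (\<Prod>k<N. indicator (B k) (xi (Suc t) k \<omega>) :: real)"
      using prod_eq_single[OF j, of "\<lambda>k. indicator (B k) (xi (Suc t) k _) :: real"]
      by (intro AE_I2) (auto simp: B_def xi_space)
  qed (simp_all add: prod_meas)
  moreover have "AE \<omega> in M. real_cond_exp M (Fh t) (\<lambda>\<omega>. \<Prod>k<N. indicator (B k) (xi (Suc t) k \<omega>)) \<omega>
      = (\<Prod>k<N. measure (K (xih t k \<omega>)) (B k))"
    by (rule evolution_prod_cond_exp) (simp add: B_def A)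
  moreover have "(\<Prod>k<N. measure (K (xih t k \<omega>)) (B k)) = measure (K (xih t j \<omega>)) A"
    if "\<omega> \<in> space M" for \<omega>
  proof -
    have "measure (K (xih t k \<omega>)) (space X) = 1" if "k < N" for k
      using prob_space.prob_space[OF K_prob(1)] space_K xih_space[OF that \<open>\<omega> \<in> space M\<close>] by metis
    then show ?thesis
      using prod_eq_single[OF j, of "\<lambda>k. measure (K (xih t k \<omega>)) (B k)"] by (auto simp: B_def)
  qed
  ultimately show ?thesis by (auto elim!: AE_mp)
qed

lemma evolution_nn_integral_particle:
  assumes j: "j < N" and Z[measurable]: "Z \<in> borel_measurable (Fh t)" and g: "g \<in> borel_measurable X"
  shows "(\<integral>\<^sup>+\<omega>. Z \<omega> * g (xi (Suc t) j \<omega>) \<partial>M) = (\<integral>\<^sup>+\<omega>. Z \<omega> * kernel_nn g (xih t j \<omega>) \<partial>M)"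
proof -
  interpret S: sigma_finite_subalgebra M "Fh t" by (rule sigma_finite_Fh)
  have [measurable]: "xi (Suc t) j \<in> M \<rightarrow>\<^sub>M X" "xih t j \<in> M \<rightarrow>\<^sub>M X" "Z \<in> borel_measurable M"
    using xi_meas xih_meas measurable_from_subalg[OF subalg_Fh Z] j by auto
  have sets: "(\<integral>\<^sup>+\<omega>. Z \<omega> * indicator A (xi (Suc t) j \<omega>) \<partial>M) = (\<integral>\<^sup>+\<omega>. Z \<omega> * kernel_nn (indicator A) (xih t j \<omega>) \<partial>M)"
    if [measurable]: "A \<in> sets X" for A
  proof -
    have int: "integrable M (\<lambda>\<omega>. indicator A (xi (Suc t) j \<omega>) :: real)"
      by (rule P.integrable_const_bound[where B=1]) auto
    have "(\<integral>\<^sup>+\<omega>. Z \<omega> * indicator A (xi (Suc t) j \<omega>) \<partial>M)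
        = (\<integral>\<^sup>+\<omega>. Z \<omega> * nn_cond_exp M (Fh t) (\<lambda>\<omega>. ennreal (indicator A (xi (Suc t) j \<omega>))) \<omega> \<partial>M)"
      by (subst S.nn_cond_exp_intg) (simp_all add: ennreal_indicator)
    also have "\<dots> = (\<integral>\<^sup>+\<omega>. Z \<omega> * ennreal (measure (K (xih t j \<omega>)) A) \<partial>M)"
      using S.nn_cond_exp_eq_real_cond_exp[OF int indicator_pos_le] evolution_cond_prob[OF j that, of t]
      by (intro nn_integral_cong_AE) (auto elim!: AE_mp)
    also have "\<dots> = (\<integral>\<^sup>+\<omega>. Z \<omega> * kernel_nn (indicator A) (xih t j \<omega>) \<partial>M)"
      by (intro nn_integral_cong) (simp add: kernel_nn_indicator xih_space j)
    finally show ?thesis .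
  qed
  show ?thesis unfolding kernel_nn_def
    by (rule nn_integral_kernel_transfer[OF _ _ _ K_subprob P.not_empty _ g]) (use sets in \<open>simp_all add: kernel_nn_def\<close>)
qed

lemma evolution_nn_integral:
  assumes Z[measurable]: "Z \<in> borel_measurable (Fh t)" and g[measurable]: "g \<in> borel_measurable X"
  shows "(\<integral>\<^sup>+\<omega>. Z \<omega> * (\<Sum>j<N. ennreal (w (Suc t) j \<omega>) * g (xi (Suc t) j \<omega>)) \<partial>M)
       = (\<integral>\<^sup>+\<omega>. Z \<omega> * (\<Sum>j<N. ennreal (wh t j \<omega>) * kernel_nn g (xih t j \<omega>)) \<partial>M)"
proof -
  have [measurable]: "Z \<in> borel_measurable M" by (rule measurable_from_subalg[OF subalg_Fh Z])
  have [measurable]: "xi (Suc t) j \<in> M \<rightarrow>\<^sub>M X" "xih t j \<in> M \<rightarrow>\<^sub>M X" "wh t j \<in> borel_measurable M"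
    if "j \<in> {..<N}" for j
    using xi_meas xih_meas wh_meas that by auto
  have "(\<integral>\<^sup>+\<omega>. Z \<omega> * (\<Sum>j<N. ennreal (w (Suc t) j \<omega>) * g (xi (Suc t) j \<omega>)) \<partial>M)
      = (\<integral>\<^sup>+\<omega>. (\<Sum>j<N. (Z \<omega> * ennreal (wh t j \<omega>)) * g (xi (Suc t) j \<omega>)) \<partial>M)"
    by (rule nn_integral_cong) (simp add: w_Suc sum_distrib_left mult.assoc)
  also have "\<dots> = (\<Sum>j<N. \<integral>\<^sup>+\<omega>. (Z \<omega> * ennreal (wh t j \<omega>)) * g (xi (Suc t) j \<omega>) \<partial>M)"
    by (rule nn_integral_sum) simp
  also have "\<dots> = (\<Sum>j<N. \<integral>\<^sup>+\<omega>. (Z \<omega> * ennreal (wh t j \<omega>)) * kernel_nn g (xih t j \<omega>) \<partial>M)"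
    by (intro sum.cong refl evolution_nn_integral_particle g) (use wh_measFh in auto)
  also have "\<dots> = (\<integral>\<^sup>+\<omega>. (\<Sum>j<N. (Z \<omega> * ennreal (wh t j \<omega>)) * kernel_nn g (xih t j \<omega>)) \<partial>M)"
    by (rule nn_integral_sum[symmetric]) simp
  also have "\<dots> = (\<integral>\<^sup>+\<omega>. Z \<omega> * (\<Sum>j<N. ennreal (wh t j \<omega>) * kernel_nn g (xih t j \<omega>)) \<partial>M)"
    by (simp add: sum_distrib_left mult.assoc)
  finally show ?thesis .
qed

definition moment :: "nat \<Rightarrow> ('x \<Rightarrow> ennreal) \<Rightarrow> ennreal" where
  "moment t g = (\<integral>\<^sup>+\<omega>. (\<Sum>i<N. ennreal (w t i \<omega>) * g (xi t i \<omega>)) \<partial>M)"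

lemma moment_integrand_measurable[measurable]:
  "g \<in> borel_measurable X \<Longrightarrow> (\<lambda>\<omega>. \<Sum>i<N. ennreal (w t i \<omega>) * g (xi t i \<omega>)) \<in> borel_measurable M"
proof (rule borel_measurable_sum)
  fix i assume "g \<in> borel_measurable X" "i \<in> {..<N}"
  then have [measurable]: "xi t i \<in> M \<rightarrow>\<^sub>M X" "w t i \<in> borel_measurable M" "g \<in> borel_measurable X"
    using xi_meas w_meas by auto
  show "(\<lambda>\<omega>. ennreal (w t i \<omega>) * g (xi t i \<omega>)) \<in> borel_measurable M" by measurable
qed

lemma moment_Suc:
  assumes [measurable]: "g \<in> borel_measurable X"
  shows "moment (Suc t) g = moment t (kernel_nn g)"
proof -
  have "moment (Suc t) g = (\<integral>\<^sup>+\<omega>. 1 * (\<Sum>j<N. ennreal (w (Suc t) j \<omega>) * g (xi (Suc t) j \<omega>)) \<partial>M)"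
    unfolding moment_def by simp
  also have "\<dots> = (\<integral>\<^sup>+\<omega>. 1 * (\<Sum>j<N. ennreal (wh t j \<omega>) * kernel_nn g (xih t j \<omega>)) \<partial>M)"
    by (rule evolution_nn_integral) simp_all
  also have "\<dots> = (\<integral>\<^sup>+\<omega>. 1 * (\<Sum>i<N. ennreal (w t i \<omega>) * kernel_nn g (xi t i \<omega>)) \<partial>M)"
    by (rule splitting_nn_integral) simp_all
  finally show ?thesis unfolding moment_def by simp
qed

lemma mu0_prob_algebra: "\<mu>0 \<in> space (prob_algebra X)"
  using mu0 by (simp add: space_prob_algebra)

lemma moment_0:
  assumes g[measurable]: "g \<in> borel_measurable X"
  shows "moment 0 g = (\<integral>\<^sup>+x. g x \<partial>\<mu>0)"
proof -
  have "moment 0 g = (\<Sum>i<N. \<integral>\<^sup>+\<omega>. ennreal (1 / real N) * g (xi 0 i \<omega>) \<partial>M)"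
    unfolding moment_def
  proof (subst nn_integral_sum[symmetric])
    fix i assume "i \<in> {..<N}"
    then have [measurable]: "xi 0 i \<in> M \<rightarrow>\<^sub>M X" using xi_meas by auto
    show "(\<lambda>\<omega>. ennreal (1 / real N) * g (xi 0 i \<omega>)) \<in> borel_measurable M" by measurable
  qed (rule nn_integral_cong, auto simp: w0)
  also have "\<dots> = (\<Sum>i<N. ennreal (1 / real N) * (\<integral>\<^sup>+x. g x \<partial>\<mu>0))"
  proof (rule sum.cong[OF refl])
    fix i assume i: "i \<in> {..<N}"
    then have [measurable]: "xi 0 i \<in> M \<rightarrow>\<^sub>M X" using xi_meas by auto
    have "(\<integral>\<^sup>+\<omega>. ennreal (1 / real N) * g (xi 0 i \<omega>) \<partial>M) = ennreal (1 / real N) * (\<integral>\<^sup>+\<omega>. g (xi 0 i \<omega>) \<partial>M)"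
      by (rule nn_integral_cmult) simp
    also have "(\<integral>\<^sup>+\<omega>. g (xi 0 i \<omega>) \<partial>M) = (\<integral>\<^sup>+x. g x \<partial>distr M X (xi 0 i))"
      by (rule nn_integral_distr[symmetric]) simp_all
    also have "distr M X (xi 0 i) = \<mu>0" using xi0_distr i by auto
    finally show "(\<integral>\<^sup>+\<omega>. ennreal (1 / real N) * g (xi 0 i \<omega>) \<partial>M) = ennreal (1 / real N) * (\<integral>\<^sup>+x. g x \<partial>\<mu>0)" .
  qed
  also have "\<dots> = (of_nat N * ennreal (1 / real N)) * (\<integral>\<^sup>+x. g x \<partial>\<mu>0)"
    by (simp add: mult.assoc)
  also have "of_nat N * ennreal (1 / real N) = 1"
    using N by (simp add: ennreal_of_nat_eq_real_of_nat ennreal_mult[symmetric])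
  finally show ?thesis by simp
qed

lemma moment_meas_kpow:
  assumes g[measurable]: "g \<in> borel_measurable X"
  shows "moment t g = (\<integral>\<^sup>+x. g x \<partial>meas_kpow \<mu>0 K t)"
  using g
proof (induction t arbitrary: g)
  case 0 then show ?case using moment_0 by (simp add: meas_kpow_def)
next
  case (Suc t)
  have [measurable]: "g \<in> borel_measurable X" by fact
  have st: "sets (meas_kpow \<mu>0 K t) = sets X" using meas_kpow_prob_algebra[OF mu0_prob_algebra] by (simp add: space_prob_algebra)
  have "moment (Suc t) g = moment t (kernel_nn g)" by (rule moment_Suc) simp
  also have "\<dots> = (\<integral>\<^sup>+x. kernel_nn g x \<partial>meas_kpow \<mu>0 K t)" by (rule Suc.IH) simp
  also have "\<dots> = (\<integral>\<^sup>+x. g x \<partial>(meas_kpow \<mu>0 K t \<bind> K))"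
  proof -
    have Kt: "K \<in> meas_kpow \<mu>0 K t \<rightarrow>\<^sub>M subprob_algebra X"
      using K_subprob measurable_cong_sets[OF st refl] by blast
    show ?thesis unfolding kernel_nn_def
      by (rule nn_integral_bind[where B=X, symmetric]) (simp_all add: Kt)
  qed
  also have "meas_kpow \<mu>0 K t \<bind> K = meas_kpow \<mu>0 K (Suc t)" unfolding meas_kpow_def by simp
  finally show ?case .
qed

lemma moment_kernel_nn_pow: "g \<in> borel_measurable X \<Longrightarrow> moment t ((kernel_nn ^^ n) g) = moment (t + n) g"
proof (induction n arbitrary: t)
  case (Suc n)
  have "moment t ((kernel_nn ^^ Suc n) g) = moment (Suc t) ((kernel_nn ^^ n) g)"
    by (simp add: moment_Suc[OF kernel_nn_pow_measurable[OF Suc.prems]])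
  also have "\<dots> = moment (Suc t + n) g" by (rule Suc.IH) fact
  finally show ?case by simp
qed simp

lemma moment_const: "moment t (\<lambda>_. c) = c"
proof -
  interpret Q: prob_space "meas_kpow \<mu>0 K t"
    using meas_kpow_prob_algebra[OF mu0_prob_algebra] by (simp add: space_prob_algebra)
  show ?thesis by (subst moment_meas_kpow) (simp_all add: Q.emeasure_space_1)
qed

lemma moment_mono: "(\<And>y. y \<in> space X \<Longrightarrow> f y \<le> g y) \<Longrightarrow> moment t f \<le> moment t g"
  unfolding moment_def
  by (intro nn_integral_mono sum_mono mult_left_mono) (auto simp: xi_space)

lemma moment_add:
  assumes "a \<in> borel_measurable X" "b \<in> borel_measurable X"
  shows "moment t (\<lambda>y. a y + b y) = moment t a + moment t b"
proof -
  have "moment t (\<lambda>y. a y + b y) = (\<integral>\<^sup>+\<omega>. (\<Sum>i<N. ennreal (w t i \<omega>) * a (xi t i \<omega>)) + (\<Sum>i<N. ennreal (w t i \<omega>) * b (xi t i \<omega>)) \<partial>M)"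
    unfolding moment_def by (simp add: distrib_left sum.distrib)
  also have "\<dots> = moment t a + moment t b" unfolding moment_def
    by (rule nn_integral_add) (use assms moment_integrand_measurable in auto)
  finally show ?thesis .
qed

lemma moment_sum:
  assumes "finite I" "\<And>s. s \<in> I \<Longrightarrow> g s \<in> borel_measurable X"
  shows "moment t (\<lambda>y. \<Sum>s\<in>I. g s y) = (\<Sum>s\<in>I. moment t (g s))"
proof -
  have "moment t (\<lambda>y. \<Sum>s\<in>I. g s y) = (\<integral>\<^sup>+\<omega>. (\<Sum>s\<in>I. \<Sum>i<N. ennreal (w t i \<omega>) * g s (xi t i \<omega>)) \<partial>M)"
    unfolding moment_def by (simp add: sum_distrib_left sum.swap[of _ I])
  also have "\<dots> = (\<Sum>s\<in>I. \<integral>\<^sup>+\<omega>. (\<Sum>i<N. ennreal (w t i \<omega>) * g s (xi t i \<omega>)) \<partial>M)"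
  proof (rule nn_integral_sum)
    fix s assume s: "s \<in> I"
    show "(\<lambda>\<omega>. \<Sum>i<N. ennreal (w t i \<omega>) * g s (xi t i \<omega>)) \<in> borel_measurable M"
    proof (rule borel_measurable_sum)
      fix i assume "i \<in> {..<N}"
      then have [measurable]: "xi t i \<in> M \<rightarrow>\<^sub>M X" "w t i \<in> borel_measurable M" "g s \<in> borel_measurable X"
        using xi_meas w_meas assms s by auto
      show "(\<lambda>\<omega>. ennreal (w t i \<omega>) * g s (xi t i \<omega>)) \<in> borel_measurable M" by measurable
    qed
  qed
  finally show ?thesis unfolding moment_def .
qed

lemma moment_finite_AE:
  assumes "g \<in> borel_measurable X" "moment t g < \<infinity>"
  shows "AE \<omega> in M. \<forall>i<N. g (xi t i \<omega>) < \<infinity>"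
proof -
  have "AE \<omega> in M. (\<Sum>i<N. ennreal (w t i \<omega>) * g (xi t i \<omega>)) \<noteq> \<infinity>"
    using assms unfolding moment_def by (intro nn_integral_PInf_AE) auto
  with AE_space show ?thesis
  proof eventually_elim
    case (elim \<omega>)
    then show ?case using ennreal_weighted_sum_finite[OF elim(2)] w_pos by blast
  qed
qed

lemma children_finite_AE:
  assumes [measurable]: "g \<in> borel_measurable X" and finite: "moment t g < \<infinity>"
  shows "AE \<omega> in M. \<forall>j<N. g (xih t j \<omega>) < \<infinity>"
proof -
  have "(\<integral>\<^sup>+\<omega>. 1 * (\<Sum>j<N. ennreal (wh t j \<omega>) * g (xih t j \<omega>)) \<partial>M) = moment t g"
    unfolding moment_def by (subst splitting_nn_integral) simp_all
  then have "AE \<omega> in M. (\<Sum>j<N. ennreal (wh t j \<omega>) * g (xih t j \<omega>)) \<noteq> \<infinity>"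
  proof (intro nn_integral_PInf_AE borel_measurable_sum)
    fix j assume "j \<in> {..<N}"
    then have [measurable]: "xih t j \<in> M \<rightarrow>\<^sub>M X" "wh t j \<in> borel_measurable M" using xih_meas wh_meas by auto
    show "(\<lambda>\<omega>. ennreal (wh t j \<omega>) * g (xih t j \<omega>)) \<in> borel_measurable M" by measurable
  qed (use finite in auto)
  with wh_pos_AE[of t] show ?thesis
  proof eventually_elim
    case (elim \<omega>)
    then show ?case using ennreal_weighted_sum_finite[OF elim(2)] by blast
  qed
qed

lemma splitting_cond_exp_nonneg:
  assumes [measurable]: "h \<in> borel_measurable X" and nonneg: "\<And>y. y \<in> space X \<Longrightarrow> 0 \<le> h y"
    and finite: "moment t (\<lambda>y. ennreal (h y)) < \<infinity>"
  shows "integrable M (child_wsum t h)" "integrable M (wsum t h)"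
    "AE \<omega> in M. real_cond_exp M (F t) (child_wsum t h) \<omega> = wsum t h \<omega>"
proof -
  interpret S: sigma_finite_subalgebra M "F t" by (rule sigma_finite_F)
  have wsum: "ennreal (wsum t h \<omega>) = (\<Sum>i<N. ennreal (w t i \<omega>) * ennreal (h (xi t i \<omega>)))"
    if "\<omega> \<in> space M" for \<omega>
    using ennreal_wsum[OF that nonneg] .
  have eq: "(\<integral>\<^sup>+\<omega>. indicator A \<omega> * ennreal (child_wsum t h \<omega>) \<partial>M) = (\<integral>\<^sup>+\<omega>. indicator A \<omega> * ennreal (wsum t h \<omega>) \<partial>M)"
    if A: "A \<in> sets (F t)" for A
  proof -
    have "(\<integral>\<^sup>+\<omega>. indicator A \<omega> * ennreal (child_wsum t h \<omega>) \<partial>M)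
        = (\<integral>\<^sup>+\<omega>. indicator A \<omega> * (\<Sum>j<N. ennreal (wh t j \<omega>) * ennreal (h (xih t j \<omega>))) \<partial>M)"
    proof (rule nn_integral_cong_AE)
      have "AE \<omega> in M. ennreal (child_wsum t h \<omega>) = (\<Sum>j<N. ennreal (wh t j \<omega>) * ennreal (h (xih t j \<omega>)))"
        by (rule ennreal_child_wsum) (rule nonneg)
      then show "AE \<omega> in M. indicator A \<omega> * ennreal (child_wsum t h \<omega>)
          = indicator A \<omega> * (\<Sum>j<N. ennreal (wh t j \<omega>) * ennreal (h (xih t j \<omega>)))"
        by eventually_elim simp
    qed
    also have "\<dots> = (\<integral>\<^sup>+\<omega>. indicator A \<omega> * (\<Sum>i<N. ennreal (w t i \<omega>) * ennreal (h (xi t i \<omega>))) \<partial>M)"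
      by (rule splitting_nn_integral) (use A in simp_all)
    also have "\<dots> = (\<integral>\<^sup>+\<omega>. indicator A \<omega> * ennreal (wsum t h \<omega>) \<partial>M)"
      by (rule nn_integral_cong) (simp add: wsum)
    finally show ?thesis .
  qed
  have "(\<integral>\<^sup>+\<omega>. ennreal (wsum t h \<omega>) \<partial>M) = moment t (\<lambda>y. ennreal (h y))"
    unfolding moment_def by (rule nn_integral_cong) (rule wsum)
  with finite have fin: "(\<integral>\<^sup>+\<omega>. ennreal (wsum t h \<omega>) \<partial>M) < \<infinity>" by simp
  have nonneg_child: "AE \<omega> in M. 0 \<le> child_wsum t h \<omega>"
    using wh_pos_AE[of t] AE_space
    by eventually_elim (auto simp: child_wsum_def nonneg xih_space less_imp_le intro!: sum_nonneg)
  have nonneg_wsum: "AE \<omega> in M. 0 \<le> wsum t h \<omega>"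
    by (intro AE_I2) (auto simp: wsum_def nonneg xi_space w_nn intro!: sum_nonneg)
  have meas: "child_wsum t h \<in> borel_measurable M" "wsum t h \<in> borel_measurable (F t)"
    by (simp_all add: wsum_measF)
  show "integrable M (child_wsum t h)" "integrable M (wsum t h)"
    "AE \<omega> in M. real_cond_exp M (F t) (child_wsum t h) \<omega> = wsum t h \<omega>"
    by (rule S.real_cond_exp_eq_of_nn_integral_eq[OF meas nonneg_child nonneg_wsum eq fin]; assumption)+
qed

lemma splitting_cond_exp:
  assumes [measurable]: "g \<in> borel_measurable X" and finite: "moment t (\<lambda>y. ennreal \<bar>g y\<bar>) < \<infinity>"
  shows "integrable M (child_wsum t g)" "integrable M (wsum t g)"
    "AE \<omega> in M. real_cond_exp M (F t) (child_wsum t g) \<omega> = wsum t g \<omega>"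
proof -
  interpret S: sigma_finite_subalgebra M "F t" by (rule sigma_finite_F)
  define gp gn where "gp y = max (g y) 0" and "gn y = max (- g y) 0" for y
  have [measurable]: "gp \<in> borel_measurable X" "gn \<in> borel_measurable X" unfolding gp_def gn_def by measurable
  have "moment t (\<lambda>y. ennreal (gp y)) \<le> moment t (\<lambda>y. ennreal \<bar>g y\<bar>)"
    "moment t (\<lambda>y. ennreal (gn y)) \<le> moment t (\<lambda>y. ennreal \<bar>g y\<bar>)"
    by (intro moment_mono ennreal_leI; simp add: gp_def gn_def)+
  then have "moment t (\<lambda>y. ennreal (gp y)) < \<infinity>" "moment t (\<lambda>y. ennreal (gn y)) < \<infinity>"
    using finite by (auto intro: le_less_trans)
  then have P: "integrable M (child_wsum t gp)" "integrable M (wsum t gp)"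
      "AE \<omega> in M. real_cond_exp M (F t) (child_wsum t gp) \<omega> = wsum t gp \<omega>"
    and Q: "integrable M (child_wsum t gn)" "integrable M (wsum t gn)"
      "AE \<omega> in M. real_cond_exp M (F t) (child_wsum t gn) \<omega> = wsum t gn \<omega>"
    by (auto intro!: splitting_cond_exp_nonneg simp: gp_def gn_def)
  have "g = (\<lambda>y. gp y - gn y)" by (auto simp: gp_def gn_def fun_eq_iff max_def)
  then have eqs: "child_wsum t g = (\<lambda>\<omega>. child_wsum t gp \<omega> - child_wsum t gn \<omega>)"
      "wsum t g = (\<lambda>\<omega>. wsum t gp \<omega> - wsum t gn \<omega>)"
    by (metis child_wsum_diff wsum_diff)+
  show "integrable M (child_wsum t g)" "integrable M (wsum t g)" unfolding eqs using P Q by auto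
  show "AE \<omega> in M. real_cond_exp M (F t) (child_wsum t g) \<omega> = wsum t g \<omega>"
    using S.real_cond_exp_diff[OF P(1) Q(1)] P(3) Q(3) unfolding eqs by eventually_elim simp
qed

lemma ennreal_child_wsum_kernel_app:
  assumes [measurable]: "h \<in> borel_measurable X" and nonneg: "\<And>y. 0 \<le> h y"
    and finite: "moment t (kernel_nn (\<lambda>y. ennreal (h y))) < \<infinity>"
  shows "AE \<omega> in M. ennreal (child_wsum t (kernel_app K h) \<omega>)
      = (\<Sum>j<N. ennreal (wh t j \<omega>) * kernel_nn (\<lambda>y. ennreal (h y)) (xih t j \<omega>))"
proof -
  have Kh_nonneg: "\<And>y. y \<in> space X \<Longrightarrow> 0 \<le> kernel_app K h y"
    by (rule kernel_app_nonneg) (simp_all add: nonneg)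
  have "AE \<omega> in M. ennreal (child_wsum t (kernel_app K h) \<omega>)
      = (\<Sum>j<N. ennreal (wh t j \<omega>) * ennreal (kernel_app K h (xih t j \<omega>)))"
    by (rule ennreal_child_wsum) (rule Kh_nonneg)
  moreover have "AE \<omega> in M. \<forall>j<N. kernel_nn (\<lambda>y. ennreal (h y)) (xih t j \<omega>) < \<infinity>"
    by (rule children_finite_AE[OF _ finite]) simp
  ultimately show ?thesis
    using AE_space by eventually_elim (simp add: nonneg ennreal_kernel_app xih_space)
qed

lemma evolution_cond_exp_nonneg:
  assumes [measurable]: "h \<in> borel_measurable X" and nonneg: "\<And>y. 0 \<le> h y"
    and finite: "moment t (kernel_nn (\<lambda>y. ennreal (h y))) < \<infinity>"
  shows "integrable M (wsum (Suc t) h)" "integrable M (child_wsum t (kernel_app K h))"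
    "AE \<omega> in M. real_cond_exp M (Fh t) (wsum (Suc t) h) \<omega> = child_wsum t (kernel_app K h) \<omega>"
proof -
  interpret S: sigma_finite_subalgebra M "Fh t" by (rule sigma_finite_Fh)
  have wsum: "ennreal (wsum (Suc t) h \<omega>) = (\<Sum>j<N. ennreal (w (Suc t) j \<omega>) * ennreal (h (xi (Suc t) j \<omega>)))"
    if "\<omega> \<in> space M" for \<omega>
    by (rule ennreal_wsum[OF that]) (rule nonneg)
  have child_AE: "AE \<omega> in M. ennreal (child_wsum t (kernel_app K h) \<omega>)
      = (\<Sum>j<N. ennreal (wh t j \<omega>) * kernel_nn (\<lambda>y. ennreal (h y)) (xih t j \<omega>))"
    by (rule ennreal_child_wsum_kernel_app[OF _ _ finite]) (simp_all add: nonneg)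
  have child: "(\<integral>\<^sup>+\<omega>. Z \<omega> * ennreal (child_wsum t (kernel_app K h) \<omega>) \<partial>M)
      = (\<integral>\<^sup>+\<omega>. Z \<omega> * (\<Sum>j<N. ennreal (wh t j \<omega>) * kernel_nn (\<lambda>y. ennreal (h y)) (xih t j \<omega>)) \<partial>M)" for Z
    by (rule nn_integral_cong_AE) (use child_AE in \<open>eventually_elim, simp\<close>)
  have eq: "(\<integral>\<^sup>+\<omega>. indicator A \<omega> * ennreal (wsum (Suc t) h \<omega>) \<partial>M)
      = (\<integral>\<^sup>+\<omega>. indicator A \<omega> * ennreal (child_wsum t (kernel_app K h) \<omega>) \<partial>M)"
    if A: "A \<in> sets (Fh t)" for A
  proof -
    have "(\<integral>\<^sup>+\<omega>. indicator A \<omega> * ennreal (wsum (Suc t) h \<omega>) \<partial>M)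
        = (\<integral>\<^sup>+\<omega>. indicator A \<omega> * (\<Sum>j<N. ennreal (w (Suc t) j \<omega>) * ennreal (h (xi (Suc t) j \<omega>))) \<partial>M)"
      by (rule nn_integral_cong) (simp add: wsum)
    also have "\<dots> = (\<integral>\<^sup>+\<omega>. indicator A \<omega> * (\<Sum>j<N. ennreal (wh t j \<omega>) * kernel_nn (\<lambda>y. ennreal (h y)) (xih t j \<omega>)) \<partial>M)"
      by (rule evolution_nn_integral) (use A in simp_all)
    finally show ?thesis unfolding child .
  qed
  have fin: "(\<integral>\<^sup>+\<omega>. ennreal (child_wsum t (kernel_app K h) \<omega>) \<partial>M) < \<infinity>"
    using child[of "\<lambda>_. 1"] splitting_nn_integral[of "\<lambda>_. 1" t "kernel_nn (\<lambda>y. ennreal (h y))"] finite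
    unfolding moment_def by simp
  have nonneg_child: "AE \<omega> in M. 0 \<le> child_wsum t (kernel_app K h) \<omega>"
    using wh_pos_AE[of t] AE_space
    by eventually_elim (auto simp: child_wsum_def xih_space kernel_app_nonneg nonneg less_imp_le intro!: sum_nonneg)
  have nonneg_wsum: "AE \<omega> in M. 0 \<le> wsum (Suc t) h \<omega>"
    by (intro AE_I2) (auto simp: wsum_def nonneg w_nn intro!: sum_nonneg)
  have meas: "wsum (Suc t) h \<in> borel_measurable M" "child_wsum t (kernel_app K h) \<in> borel_measurable (Fh t)"
    by (simp_all add: child_wsum_measFh)
  show "integrable M (wsum (Suc t) h)" "integrable M (child_wsum t (kernel_app K h))"
    "AE \<omega> in M. real_cond_exp M (Fh t) (wsum (Suc t) h) \<omega> = child_wsum t (kernel_app K h) \<omega>"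
    by (rule S.real_cond_exp_eq_of_nn_integral_eq[OF meas nonneg_wsum nonneg_child eq fin]; assumption)+
qed

lemma evolution_cond_exp:
  assumes [measurable]: "g \<in> borel_measurable X" and finite: "moment t (kernel_nn (\<lambda>y. ennreal \<bar>g y\<bar>)) < \<infinity>"
  shows "integrable M (wsum (Suc t) g)" "integrable M (child_wsum t (kernel_app K g))"
    "AE \<omega> in M. real_cond_exp M (Fh t) (wsum (Suc t) g) \<omega> = child_wsum t (kernel_app K g) \<omega>"
proof -
  interpret S: sigma_finite_subalgebra M "Fh t" by (rule sigma_finite_Fh)
  define gp gn where "gp y = max (g y) 0" and "gn y = max (- g y) 0" for y
  have [measurable]: "gp \<in> borel_measurable X" "gn \<in> borel_measurable X" unfolding gp_def gn_def by measurable
  have "moment t (kernel_nn (\<lambda>y. ennreal (gp y))) \<le> moment t (kernel_nn (\<lambda>y. ennreal \<bar>g y\<bar>))"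
    "moment t (kernel_nn (\<lambda>y. ennreal (gn y))) \<le> moment t (kernel_nn (\<lambda>y. ennreal \<bar>g y\<bar>))"
    by (intro moment_mono kernel_nn_mono ennreal_leI; simp add: gp_def gn_def)+
  then have "moment t (kernel_nn (\<lambda>y. ennreal (gp y))) < \<infinity>" "moment t (kernel_nn (\<lambda>y. ennreal (gn y))) < \<infinity>"
    using finite by (auto intro: le_less_trans)
  then have P: "integrable M (wsum (Suc t) gp)" "integrable M (child_wsum t (kernel_app K gp))"
      "AE \<omega> in M. real_cond_exp M (Fh t) (wsum (Suc t) gp) \<omega> = child_wsum t (kernel_app K gp) \<omega>"
    and Q: "integrable M (wsum (Suc t) gn)" "integrable M (child_wsum t (kernel_app K gn))"
      "AE \<omega> in M. real_cond_exp M (Fh t) (wsum (Suc t) gn) \<omega> = child_wsum t (kernel_app K gn) \<omega>"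
    by (auto intro!: evolution_cond_exp_nonneg simp: gp_def gn_def)
  have "g = (\<lambda>y. gp y - gn y)" by (auto simp: gp_def gn_def fun_eq_iff max_def)
  then have eq: "wsum (Suc t) g = (\<lambda>\<omega>. wsum (Suc t) gp \<omega> - wsum (Suc t) gn \<omega>)"
    by (metis wsum_diff)
  have decomp: "kernel_app K g x = kernel_app K gp x - kernel_app K gn x"
    if "x \<in> space X" "kernel_nn (\<lambda>y. ennreal \<bar>g y\<bar>) x < \<infinity>" for x
  proof -
    have "integrable (K x) g" by (rule integrable_K_of_kernel_nn_finite) (use that in simp_all)
    then have "integrable (K x) gp" "integrable (K x) gn" unfolding gp_def gn_def by (auto intro!: integrable_max)
    then show ?thesis using kernel_app_diff \<open>g = (\<lambda>y. gp y - gn y)\<close> by metis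
  qed
  have "AE \<omega> in M. \<forall>j<N. kernel_nn (\<lambda>y. ennreal \<bar>g y\<bar>) (xih t j \<omega>) < \<infinity>"
    by (rule children_finite_AE[OF _ finite]) simp
  then have eq_AE: "AE \<omega> in M. child_wsum t (kernel_app K gp) \<omega> - child_wsum t (kernel_app K gn) \<omega>
      = child_wsum t (kernel_app K g) \<omega>"
    using AE_space by eventually_elim (simp add: child_wsum_def xih_space decomp right_diff_distrib sum_subtractf)
  show "integrable M (wsum (Suc t) g)" unfolding eq using P Q by auto
  show "integrable M (child_wsum t (kernel_app K g))"
    by (rule integrable_cong_AE_imp[OF Bochner_Integration.integrable_diff[OF P(2) Q(2)] _ eq_AE])
      (rule child_wsum_meas, simp)
  show "AE \<omega> in M. real_cond_exp M (Fh t) (wsum (Suc t) g) \<omega> = child_wsum t (kernel_app K g) \<omega>"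
    using S.real_cond_exp_diff[OF P(1) Q(1)] P(3) Q(3) eq_AE unfolding eq by eventually_elim simp
qed

end

section \<open>The ensemble average as a Doob martingale\<close>

locale weighted_ensemble_observable = weighted_ensemble X K
  for X :: "'x measure" and K +
  fixes \<mu> :: "'x measure" and f :: "'x \<Rightarrow> real" and T :: nat
  assumes f[measurable]: "f \<in> borel_measurable X"
    and f_int: "\<And>t. t \<le> T - 1 \<Longrightarrow> (\<integral>\<^sup>+ x. ennreal \<bar>f x\<bar> \<partial>(meas_kpow \<mu>0 K t)) < \<infinity>"
    and T: "T \<ge> 1"
begin

interpretation P: prob_space M by (rule M)

definition "mean = (\<integral>z. f z \<partial>\<mu>)"
definition "H t = hT K \<mu> f T t"
definition "centred_iter n = kernel_pow K n (\<lambda>y. f y - mean)"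

lemma H_eq: "H t x = (\<Sum>s\<in>{t..<T}. centred_iter (s - t) x)"
  unfolding H_def hT_def centred_iter_def mean_def by simp

lemma centred_iter_measurable[measurable]: "centred_iter n \<in> borel_measurable X"
  unfolding centred_iter_def by measurable

lemma H_meas[measurable]: "H t \<in> borel_measurable X"
  unfolding H_def hT_def[abs_def] by (fold mean_def centred_iter_def) measurable

lemma moment_abs_f_finite: "s < T \<Longrightarrow> moment s (\<lambda>y. ennreal \<bar>f y\<bar>) < \<infinity>"
  using f_int[of s] moment_meas_kpow[of "\<lambda>y. ennreal \<bar>f y\<bar>" s] by simp

lemma abs_centred_iter_le: "y \<in> space X \<Longrightarrow> ennreal \<bar>centred_iter n y\<bar> \<le> (kernel_nn ^^ n) (\<lambda>y. ennreal \<bar>f y\<bar>) y + ennreal \<bar>mean\<bar>"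
proof -
  assume y: "y \<in> space X"
  have "ennreal \<bar>centred_iter n y\<bar> \<le> (kernel_nn ^^ n) (\<lambda>y. ennreal \<bar>f y - mean\<bar>) y"
    unfolding centred_iter_def by (rule abs_kernel_pow_le[OF y])
  also have "\<dots> \<le> (kernel_nn ^^ n) (\<lambda>y. ennreal \<bar>f y\<bar> + ennreal \<bar>mean\<bar>) y"
  proof (rule kernel_nn_pow_mono[OF _ y])
    fix z
    have "ennreal \<bar>f z - mean\<bar> \<le> ennreal (\<bar>f z\<bar> + \<bar>mean\<bar>)" by (intro ennreal_leI abs_triangle_ineq4)
    then show "ennreal \<bar>f z - mean\<bar> \<le> ennreal \<bar>f z\<bar> + ennreal \<bar>mean\<bar>" by simp
  qed
  also have "\<dots> = (kernel_nn ^^ n) (\<lambda>y. ennreal \<bar>f y\<bar>) y + ennreal \<bar>mean\<bar>"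
    by (rule kernel_nn_pow_add_const[OF _ y]) simp
  finally show ?thesis .
qed

lemma moment_abs_H_finite: "moment t (\<lambda>y. ennreal \<bar>H t y\<bar>) < \<infinity>"
proof -
  have "moment t (\<lambda>y. ennreal \<bar>H t y\<bar>) \<le> moment t (\<lambda>y. \<Sum>s\<in>{t..<T}. (kernel_nn ^^ (s - t)) (\<lambda>y. ennreal \<bar>f y\<bar>) y + ennreal \<bar>mean\<bar>)"
  proof (rule moment_mono)
    fix y assume y: "y \<in> space X"
    have "ennreal \<bar>H t y\<bar> \<le> ennreal (\<Sum>s\<in>{t..<T}. \<bar>centred_iter (s - t) y\<bar>)"
      unfolding H_eq by (intro ennreal_leI sum_abs)
    also have "\<dots> = (\<Sum>s\<in>{t..<T}. ennreal \<bar>centred_iter (s - t) y\<bar>)" by (rule sum_ennreal[symmetric]) simp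
    also have "\<dots> \<le> (\<Sum>s\<in>{t..<T}. (kernel_nn ^^ (s - t)) (\<lambda>y. ennreal \<bar>f y\<bar>) y + ennreal \<bar>mean\<bar>)"
      by (intro sum_mono abs_centred_iter_le y)
    finally show "ennreal \<bar>H t y\<bar> \<le> (\<Sum>s\<in>{t..<T}. (kernel_nn ^^ (s - t)) (\<lambda>y. ennreal \<bar>f y\<bar>) y + ennreal \<bar>mean\<bar>)" .
  qed
  also have "\<dots> = (\<Sum>s\<in>{t..<T}. moment t (\<lambda>y. (kernel_nn ^^ (s - t)) (\<lambda>y. ennreal \<bar>f y\<bar>) y + ennreal \<bar>mean\<bar>))"
    by (rule moment_sum) auto
  also have "\<dots> = (\<Sum>s\<in>{t..<T}. moment s (\<lambda>y. ennreal \<bar>f y\<bar>) + ennreal \<bar>mean\<bar>)"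
  proof (rule sum.cong[OF refl])
    fix s assume s: "s \<in> {t..<T}"
    have "moment t (\<lambda>y. (kernel_nn ^^ (s - t)) (\<lambda>y. ennreal \<bar>f y\<bar>) y + ennreal \<bar>mean\<bar>)
        = moment t ((kernel_nn ^^ (s - t)) (\<lambda>y. ennreal \<bar>f y\<bar>)) + moment t (\<lambda>_. ennreal \<bar>mean\<bar>)"
      by (rule moment_add) auto
    also have "moment t ((kernel_nn ^^ (s - t)) (\<lambda>y. ennreal \<bar>f y\<bar>)) = moment (t + (s - t)) (\<lambda>y. ennreal \<bar>f y\<bar>)"
      by (rule moment_kernel_nn_pow) simp
    also have "t + (s - t) = s" using s by simp
    finally show "moment t (\<lambda>y. (kernel_nn ^^ (s - t)) (\<lambda>y. ennreal \<bar>f y\<bar>) y + ennreal \<bar>mean\<bar>) = moment s (\<lambda>y. ennreal \<bar>f y\<bar>) + ennreal \<bar>mean\<bar>"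
      by (simp add: moment_const)
  qed
  also have "\<dots> < \<infinity>" using moment_abs_f_finite by (simp add: less_top[symmetric])
  finally show ?thesis .
qed

lemma centred_iter_Suc: "centred_iter (Suc n) = kernel_app K (centred_iter n)"
  unfolding centred_iter_def by (rule kernel_pow_Suc)

lemma centred_iter_0: "centred_iter 0 x = f x - mean"
  unfolding centred_iter_def by (simp add: kernel_pow_0)

lemma integrable_K_centred_iter:
  assumes x: "x \<in> space X" and fin: "(kernel_nn ^^ Suc n) (\<lambda>y. ennreal \<bar>f y\<bar>) x < \<infinity>"
  shows "integrable (K x) (centred_iter n)"
proof (rule integrable_K_of_kernel_nn_finite[OF x centred_iter_measurable])
  have "kernel_nn (\<lambda>y. ennreal \<bar>centred_iter n y\<bar>) x
      \<le> kernel_nn (\<lambda>y. (kernel_nn ^^ n) (\<lambda>y. ennreal \<bar>f y\<bar>) y + ennreal \<bar>mean\<bar>) x"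
    by (rule kernel_nn_mono[OF _ x]) (rule abs_centred_iter_le)
  also have "\<dots> = (kernel_nn ^^ Suc n) (\<lambda>y. ennreal \<bar>f y\<bar>) x + ennreal \<bar>mean\<bar>"
    by (subst kernel_nn_add_const[OF x]) auto
  also have "\<dots> < \<infinity>" using fin by (simp add: less_top[symmetric])
  finally show "kernel_nn (\<lambda>y. ennreal \<bar>centred_iter n y\<bar>) x < \<infinity>" .
qed

lemma H_step:
  assumes x: "x \<in> space X" and t: "t < T"
    and fin: "\<And>m. 1 \<le> m \<Longrightarrow> m \<le> T - 1 - t \<Longrightarrow> (kernel_nn ^^ m) (\<lambda>y. ennreal \<bar>f y\<bar>) x < \<infinity>"
  shows "H t x = (f x - mean) + kernel_app K (H (Suc t)) x"
proof -
  have "H t x = centred_iter 0 x + (\<Sum>s\<in>{Suc t..<T}. centred_iter (s - t) x)"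
    unfolding H_eq using t by (subst sum.atLeast_Suc_lessThan) auto
  also have "centred_iter 0 x = f x - mean" by (rule centred_iter_0)
  also have "(\<Sum>s\<in>{Suc t..<T}. centred_iter (s - t) x) = kernel_app K (H (Suc t)) x"
  proof -
    have int: "integrable (K x) (centred_iter (s - Suc t))" if "s \<in> {Suc t..<T}" for s
      by (rule integrable_K_centred_iter[OF x fin]) (use that in auto)
    have "kernel_app K (H (Suc t)) x = (\<integral>y. (\<Sum>s\<in>{Suc t..<T}. centred_iter (s - Suc t) y) \<partial>K x)"
      unfolding kernel_app_def H_eq ..
    also have "\<dots> = (\<Sum>s\<in>{Suc t..<T}. \<integral>y. centred_iter (s - Suc t) y \<partial>K x)"
      by (rule Bochner_Integration.integral_sum) (rule int)
    also have "\<dots> = (\<Sum>s\<in>{Suc t..<T}. centred_iter (s - t) x)"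
    proof (rule sum.cong[OF refl])
      fix s assume s: "s \<in> {Suc t..<T}"
      then have "s - t = Suc (s - Suc t)" by auto
      then show "(\<integral>y. centred_iter (s - Suc t) y \<partial>K x) = centred_iter (s - t) x"
        by (simp add: centred_iter_Suc kernel_app_def)
    qed
    finally show ?thesis by simp
  qed
  finally show ?thesis .
qed

lemma wsum_H_step:
  assumes t: "t < T"
  shows "AE \<omega> in M. wsum t (H t) \<omega> = wsum t f \<omega> - mean + wsum t (kernel_app K (H (Suc t))) \<omega>"
proof -
  have "\<forall>m\<in>{1..T - 1 - t}. AE \<omega> in M. \<forall>i<N. (kernel_nn ^^ m) (\<lambda>y. ennreal \<bar>f y\<bar>) (xi t i \<omega>) < \<infinity>"
  proof
    fix m assume m: "m \<in> {1..T - 1 - t}"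
    show "AE \<omega> in M. \<forall>i<N. (kernel_nn ^^ m) (\<lambda>y. ennreal \<bar>f y\<bar>) (xi t i \<omega>) < \<infinity>"
    proof (rule moment_finite_AE)
      show "moment t ((kernel_nn ^^ m) (\<lambda>y. ennreal \<bar>f y\<bar>)) < \<infinity>"
      proof -
        have "t + m < T" using m t by auto
        then show ?thesis using moment_kernel_nn_pow[of "\<lambda>y. ennreal \<bar>f y\<bar>" t m] moment_abs_f_finite[of "t + m"] by simp
      qed
    qed simp
  qed
  then have A1: "AE \<omega> in M. \<forall>m\<in>{1..T - 1 - t}. \<forall>i<N. (kernel_nn ^^ m) (\<lambda>y. ennreal \<bar>f y\<bar>) (xi t i \<omega>) < \<infinity>"
    by (intro eventually_ball_finite) auto
  have "AE \<omega> in M. \<omega> \<in> space M" by simp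
  with A1 weights_sum_one[of t] show ?thesis
  proof eventually_elim
    case (elim \<omega>)
    have "wsum t (H t) \<omega> = (\<Sum>i<N. w t i \<omega> * ((f (xi t i \<omega>) - mean) + kernel_app K (H (Suc t)) (xi t i \<omega>)))"
      unfolding wsum_def
    proof (rule sum.cong[OF refl])
      fix i assume i: "i \<in> {..<N}"
      have "H t (xi t i \<omega>) = (f (xi t i \<omega>) - mean) + kernel_app K (H (Suc t)) (xi t i \<omega>)"
        by (rule H_step[OF _ t]) (use xi_space elim i in auto)
      then show "w t i \<omega> * H t (xi t i \<omega>) = w t i \<omega> * ((f (xi t i \<omega>) - mean) + kernel_app K (H (Suc t)) (xi t i \<omega>))"
        by simp
    qed
    also have "\<dots> = wsum t f \<omega> - mean * (\<Sum>i<N. w t i \<omega>) + wsum t (kernel_app K (H (Suc t))) \<omega>"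
      unfolding wsum_def by (simp add: algebra_simps sum.distrib sum_subtractf sum_distrib_left)
    finally show ?case using elim(2) by simp
  qed
qed

definition "S = (\<lambda>\<omega>. (1 / real T) * (\<Sum>s<T. \<Sum>i<N. w s i \<omega> * f (xi s i \<omega>)))"
definition "V t \<omega> = (1 / real T) * ((\<Sum>s<t. wsum s f \<omega>) + wsum t (H t) \<omega> + real (T - t) * mean)"
definition "Vh t \<omega> = (1 / real T) *
  ((\<Sum>s<Suc t. wsum s f \<omega>) + child_wsum t (kernel_app K (H (Suc t))) \<omega> + real (T - Suc t) * mean)"

lemma S_eq: "S = (\<lambda>\<omega>. (1 / real T) * (\<Sum>s<T. wsum s f \<omega>))"
  unfolding S_def wsum_def ..

lemma wsum_f_integrable: "s < T \<Longrightarrow> integrable M (wsum s f)"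
  by (rule splitting_cond_exp(2)[OF f moment_abs_f_finite])

lemma wsum_f_measF: "s \<le> t \<Longrightarrow> wsum s f \<in> borel_measurable (F t)"
  by (rule measurable_from_subalg[OF subalg_F_mono wsum_measF[OF f]])

lemma wsum_f_measFh: "s \<le> t \<Longrightarrow> wsum s f \<in> borel_measurable (Fh t)"
  by (rule measurable_from_subalg[OF subalg_Fh_F_le wsum_measF[OF f]])

lemma S_integrable: "integrable M S"
  unfolding S_eq by (intro integrable_mult_right Bochner_Integration.integrable_sum wsum_f_integrable) auto

lemma S_measF: "S \<in> borel_measurable (F (T - 1))"
  unfolding S_eq by (intro borel_measurable_times borel_measurable_const borel_measurable_sum wsum_f_measF) auto

lemma moment_kernel_nn_abs_H_finite: "moment t (kernel_nn (\<lambda>y. ennreal \<bar>H (Suc t) y\<bar>)) < \<infinity>"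
  using moment_Suc[of "\<lambda>y. ennreal \<bar>H (Suc t) y\<bar>" t] moment_abs_H_finite[of "Suc t"] by simp

lemma moment_abs_kernel_app_H_finite: "moment t (\<lambda>y. ennreal \<bar>kernel_app K (H (Suc t)) y\<bar>) < \<infinity>"
  using moment_mono[OF abs_kernel_app_le, of t] moment_kernel_nn_abs_H_finite by (rule le_less_trans)

lemma V_integrable: "t < T \<Longrightarrow> integrable M (V t)"
  unfolding V_def[abs_def]
  by (intro integrable_mult_right Bochner_Integration.integrable_add Bochner_Integration.integrable_sum
      wsum_f_integrable splitting_cond_exp(2)[OF H_meas moment_abs_H_finite] P.integrable_const) auto

lemma Vh_integrable: "Suc t < T \<Longrightarrow> integrable M (Vh t)"
  unfolding Vh_def[abs_def]
  by (intro integrable_mult_right Bochner_Integration.integrable_add Bochner_Integration.integrable_sum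
      wsum_f_integrable evolution_cond_exp(2)[OF H_meas moment_kernel_nn_abs_H_finite] P.integrable_const) auto

lemma V_measF: "V t \<in> borel_measurable (F t)"
  unfolding V_def[abs_def]
  by (intro borel_measurable_times borel_measurable_add borel_measurable_sum borel_measurable_const
      wsum_f_measF wsum_measF H_meas) auto

lemma Vh_measFh: "Vh t \<in> borel_measurable (Fh t)"
  unfolding Vh_def[abs_def]
  by (intro borel_measurable_times borel_measurable_add borel_measurable_sum borel_measurable_const
      wsum_f_measFh child_wsum_measFh kernel_app_measurable H_meas) auto

lemma V_Suc_eq:
  "V (Suc t) \<omega> = Vh t \<omega> + (1 / real T) *
     (wsum (Suc t) (H (Suc t)) \<omega> - child_wsum t (kernel_app K (H (Suc t))) \<omega>)"
  unfolding V_def Vh_def by (simp add: algebra_simps)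

lemma Vh_eq:
  assumes "t < T"
  shows "AE \<omega> in M. Vh t \<omega> = V t \<omega> + (1 / real T) *
     (child_wsum t (kernel_app K (H (Suc t))) \<omega> - wsum t (kernel_app K (H (Suc t))) \<omega>)"
  using wsum_H_step[OF assms]
proof eventually_elim
  case (elim \<omega>)
  have "real (T - t) = real (T - Suc t) + 1" using assms by simp
  then show ?case unfolding V_def Vh_def elim by (simp add: algebra_simps)
qed

lemma cond_exp_F_last: "AE \<omega> in M. real_cond_exp M (F (T - 1)) S \<omega> = V (T - 1) \<omega>"
proof -
  interpret S: sigma_finite_subalgebra M "F (T - 1)" by (rule sigma_finite_F)
  have T1: "Suc (T - 1) = T" using T by simp
  have "kernel_app K (H T) = (\<lambda>_. 0)" by (simp add: H_eq kernel_app_def fun_eq_iff)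
  then have "wsum (T - 1) (kernel_app K (H (Suc (T - 1)))) \<omega> = 0" for \<omega>
    unfolding T1 by (simp add: wsum_def)
  moreover have "(\<Sum>s<T. wsum s f \<omega>) = (\<Sum>s<T - 1. wsum s f \<omega>) + wsum (T - 1) f \<omega>" for \<omega>
    using sum.lessThan_Suc[of "\<lambda>s. wsum s f \<omega>" "T - 1"] T1 by simp
  ultimately have "AE \<omega> in M. S \<omega> = V (T - 1) \<omega>"
    using wsum_H_step[of "T - 1"] T unfolding S_eq V_def by (auto elim!: AE_mp)
  moreover have "AE \<omega> in M. real_cond_exp M (F (T - 1)) S \<omega> = S \<omega>"
    by (rule S.real_cond_exp_F_meas[OF S_integrable S_measF])
  ultimately show ?thesis by eventually_elim simp
qed

lemma cond_exp_Fh_from_F_Suc: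
  assumes t: "Suc t < T" and IH: "AE \<omega> in M. real_cond_exp M (F (Suc t)) S \<omega> = V (Suc t) \<omega>"
  shows "AE \<omega> in M. real_cond_exp M (Fh t) S \<omega> = Vh t \<omega>"
proof -
  interpret S: sigma_finite_subalgebra M "Fh t" by (rule sigma_finite_Fh)
  note E = evolution_cond_exp[OF H_meas moment_kernel_nn_abs_H_finite, of t]
  show ?thesis
  proof (rule S.real_cond_exp_via_finer[OF subalg_F subalg_F_Suc_Fh S_integrable Vh_integrable[OF t]
        E(1) E(2) Vh_measFh _ _ E(3)])
    show "child_wsum t (kernel_app K (H (Suc t))) \<in> borel_measurable (Fh t)"
      by (simp add: child_wsum_measFh)
    show "AE \<omega> in M. real_cond_exp M (F (Suc t)) S \<omega> = Vh t \<omega> + 1 / real T *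
        (wsum (Suc t) (H (Suc t)) \<omega> - child_wsum t (kernel_app K (H (Suc t))) \<omega>)"
      using IH by (simp add: V_Suc_eq)
  qed
qed

lemma cond_exp_F_from_Fh:
  assumes t: "Suc t < T" and IH: "AE \<omega> in M. real_cond_exp M (Fh t) S \<omega> = Vh t \<omega>"
  shows "AE \<omega> in M. real_cond_exp M (F t) S \<omega> = V t \<omega>"
proof -
  interpret S: sigma_finite_subalgebra M "F t" by (rule sigma_finite_F)
  note E = splitting_cond_exp[OF kernel_app_measurable[OF H_meas] moment_abs_kernel_app_H_finite]
  have "t < T" using t by simp
  show ?thesis
  proof (rule S.real_cond_exp_via_finer[OF subalg_Fh subalg_Fh_F S_integrable V_integrable[OF \<open>t < T\<close>] E(1) E(2)
        V_measF _ _ E(3)])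
    show "wsum t (kernel_app K (H (Suc t))) \<in> borel_measurable (F t)"
      by (simp add: wsum_measF)
    show "AE \<omega> in M. real_cond_exp M (Fh t) S \<omega> = V t \<omega> + 1 / real T *
        (child_wsum t (kernel_app K (H (Suc t))) \<omega> - wsum t (kernel_app K (H (Suc t))) \<omega>)"
      using IH Vh_eq[OF \<open>t < T\<close>] by eventually_elim simp
  qed
qed

lemma cond_exp_F: "t < T \<Longrightarrow> AE \<omega> in M. real_cond_exp M (F t) S \<omega> = V t \<omega>"
proof (induction "T - 1 - t" arbitrary: t)
  case 0
  then have "t = T - 1" by simp
  then show ?case using cond_exp_F_last by simp
next
  case (Suc d)
  then have "Suc t < T" "d = T - 1 - Suc t" by auto
  then show ?case using Suc.hyps(1) cond_exp_F_from_Fh cond_exp_Fh_from_F_Suc by blast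
qed

lemma cond_exp_Fh: "Suc t < T \<Longrightarrow> AE \<omega> in M. real_cond_exp M (Fh t) S \<omega> = Vh t \<omega>"
  using cond_exp_Fh_from_F_Suc cond_exp_F by blast

lemma cond_exp_Fh_minus_F:
  assumes "t + 2 \<le> T"
  shows "AE \<omega> in M. real_cond_exp M (Fh t) S \<omega> - real_cond_exp M (F t) S \<omega> = (1 / real T) *
    ((\<Sum>i<N. wh t i \<omega> * kernel_app K (hT K \<mu> f T (Suc t)) (xih t i \<omega>))
      - (\<Sum>i<N. w t i \<omega> * kernel_app K (hT K \<mu> f T (Suc t)) (xi t i \<omega>)))"
proof -
  have "t < T" "Suc t < T" using assms by auto
  from cond_exp_F[OF \<open>t < T\<close>] cond_exp_Fh[OF \<open>Suc t < T\<close>] Vh_eq[OF \<open>t < T\<close>] show ?thesis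
    by eventually_elim (simp add: wsum_def child_wsum_def H_def[abs_def])
qed

lemma cond_exp_F_Suc_minus_Fh:
  assumes "t + 2 \<le> T"
  shows "AE \<omega> in M. real_cond_exp M (F (Suc t)) S \<omega> - real_cond_exp M (Fh t) S \<omega> = (1 / real T) *
    (\<Sum>i<N. wh t i \<omega> * (hT K \<mu> f T (Suc t) (xi (Suc t) i \<omega>) - kernel_app K (hT K \<mu> f T (Suc t)) (xih t i \<omega>)))"
proof -
  have "Suc t < T" using assms by auto
  from cond_exp_F[OF this] cond_exp_Fh[OF this] AE_space show ?thesis
    by eventually_elim
      (simp add: V_Suc_eq wsum_def child_wsum_def H_def[abs_def] w_Suc right_diff_distrib sum_subtractf)
qed

lemma cond_exp_martingale: "martingale_upto M (\<lambda>k. if even k then F (k div 2) else Fh (k div 2))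
    (\<lambda>k. if even k then real_cond_exp M (F (k div 2)) S else real_cond_exp M (Fh (k div 2)) S) n"
proof -
  let ?G = "\<lambda>k. if even k then F (k div 2) else Fh (k div 2)"
  have subG: "subalgebra M (?G k)" for k using subalg_F subalg_Fh by auto
  have subGG: "subalgebra (?G (Suc k)) (?G k)" for k
    by (cases "even k") (auto simp: subalg_Fh_F subalg_F_Suc_Fh)
  have sfG: "sigma_finite_subalgebra M (?G k)" for k by (rule prob_space_sigma_finite_subalgebra[OF M subG])
  have ceq: "(if even k then real_cond_exp M (F (k div 2)) S else real_cond_exp M (Fh (k div 2)) S)
      = real_cond_exp M (?G k) S" for k by simp
  show ?thesis
    unfolding martingale_upto_def ceq
  proof (intro conjI allI impI)
    fix k
    show "subalgebra M (?G k)" by (rule subG)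
    show "subalgebra (?G (Suc k)) (?G k)" by (rule subGG)
    interpret SG: sigma_finite_subalgebra M "?G k" by (rule sfG)
    show "integrable M (real_cond_exp M (?G k) S)" by (rule SG.real_cond_exp_int(1)[OF S_integrable])
    show "real_cond_exp M (?G k) S \<in> borel_measurable (?G k)" by (rule borel_measurable_cond_exp)
    show "AE \<omega> in M. real_cond_exp M (?G k) (real_cond_exp M (?G (Suc k)) S) \<omega> = real_cond_exp M (?G k) S \<omega>"
      by (rule SG.real_cond_exp_nested_subalg[OF subG subGG S_integrable])
  qed
qed

end

theorem mainTheorem7:
  fixes M :: "'a measure" and X :: "'x measure" and K :: "'x \<Rightarrow> 'x measure"
    and \<mu> \<mu>0 :: "'x measure" and N T :: nat
    and F Fh :: "nat \<Rightarrow> 'a measure"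
    and xi xih :: "nat \<Rightarrow> nat \<Rightarrow> 'a \<Rightarrow> 'x" and w wh C :: "nat \<Rightarrow> nat \<Rightarrow> 'a \<Rightarrow> real"
    and Nsp par bin Nb :: "nat \<Rightarrow> nat \<Rightarrow> 'a \<Rightarrow> nat"
    and f :: "'x \<Rightarrow> real"
  assumes M: "prob_space M"
    and K: "K \<in> X \<rightarrow>\<^sub>M prob_algebra X"
    and mu: "prob_space \<mu>" "sets \<mu> = sets X" "\<mu> \<bind> K = \<mu>"
    and mu0: "prob_space \<mu>0" "sets \<mu>0 = sets X"
    and N: "N \<ge> 1"
    and WE: "WE_method M X K \<mu>0 N F Fh xi w xih wh C Nsp par bin Nb"
    and T: "T \<ge> 1"
    and f: "f \<in> borel_measurable X"
    and f_int: "\<And>t. t \<le> T - 1 \<Longrightarrow> (\<integral>\<^sup>+ x. ennreal \<bar>f x\<bar> \<partial>(meas_kpow \<mu>0 K t)) < \<infinity>"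
    and f_mu: "(\<integral>\<^sup>+ x. ennreal \<bar>f x\<bar> \<partial>\<mu>) < \<infinity>"
  defines "S \<equiv> (\<lambda>\<omega>. (1 / real T) * (\<Sum>s<T. \<Sum>i<N. w s i \<omega> * f (xi s i \<omega>)))"
  defines "Y \<equiv> (\<lambda>t. real_cond_exp M (F t) S)"
    and "Yh \<equiv> (\<lambda>t. real_cond_exp M (Fh t) S)"
  shows "martingale_upto M (\<lambda>k. if even k then F (k div 2) else Fh (k div 2))
           (\<lambda>k. if even k then Y (k div 2) else Yh (k div 2)) (2 * (T - 1))
     \<and> (\<forall>t. t + 2 \<le> T \<longrightarrow>
           (AE \<omega> in M. Yh t \<omega> - Y t \<omega> =
              (1 / real T) * ((\<Sum>i<N. wh t i \<omega> * kernel_app K (hT K \<mu> f T (Suc t)) (xih t i \<omega>))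
                            - (\<Sum>i<N. w t i \<omega> * kernel_app K (hT K \<mu> f T (Suc t)) (xi t i \<omega>)))))
     \<and> (\<forall>t. t + 2 \<le> T \<longrightarrow>
           (AE \<omega> in M. Y (Suc t) \<omega> - Yh t \<omega> =
              (1 / real T) * (\<Sum>i<N. wh t i \<omega> *
                 (hT K \<mu> f T (Suc t) (xi (Suc t) i \<omega>) - kernel_app K (hT K \<mu> f T (Suc t)) (xih t i \<omega>)))))"
proof -
  interpret W: weighted_ensemble_observable where X = X and K = K and M = M and \<mu>0 = \<mu>0 and N = N
    and F = F and Fh = Fh and xi = xi and xih = xih and w = w and wh = wh and C = C and Nsp = Nsp
    and par = par and bin = bin and Nb = Nb and \<mu> = \<mu> and f = f and T = T
    using markov_kernel.intro[OF K] weighted_ensemble_axioms.intro[OF M mu0 N WE]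
      weighted_ensemble_observable_axioms.intro[OF f f_int T] by intro_locales
  have S: "S = W.S" unfolding S_def W.S_def ..
  show ?thesis unfolding Y_def Yh_def S
    using W.cond_exp_martingale W.cond_exp_Fh_minus_F W.cond_exp_F_Suc_minus_Fh by simp
qed

end
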